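(* Let $X$ be a separable real Hilbert space, $A$ the generator of a $C_0$-semigroup $(T(t))_{t\ge0}$ on $X$ with $\|T(t)\|\le Me^{-\nu t}$ ($M\ge1,\nu>0$), $N_1,\dots,N_n\in\mathcal L(X)$, $\psi_1,\dots,\psi_n\in X$, $Bu=\sum_i\psi_iu_i$, $\mathcal H$ a separable Hilbert space, $C\in\mathcal L(X,\mathcal H)$, and assume $M^2\Gamma^2(2\nu)^{-1}<1$ where $\Gamma=(\sum_i\|N_iN_i^*\|)^{1/2}$. Let $V_1\subset V_2\subset\dots\subset X$ be closed subspaces with $\overline{\bigcup_iV_i}=X$ such that each $V_i$ is invariant under $T(t)$ for all $t\ge0$ and under each $N_j$. Let $P_{V_i}$ be the orthogonal projection onto $V_i$, let $$R_{V_i}((f_k)_{k\ge0})=\sum_{k\ge0}\int_{(0,\infty)^{k+1}}P_k(s)^*(P_{V_i}B\otimes\mathrm{id}_{(\mathbb R^n)^{\otimes k}})f_k(s)\,ds,$$ and let $H_{V_i}:=WR_{V_i}$ be the Hankel operator of the system restricted to $V_i$. If the observability map $W$ is a Hilbert–Schmidt operator, then $H_{V_i}\to H$ in trace (nuclear) norm as $i\to\infty$. If $W$ is only assumed bounded, then $H_{V_i}\to H$ in Hilbert–Schmidt norm.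
   Context: $\widehat e_1,\dots,\widehat e_n$ is the standard basis of $\mathbb R^n$. For $t\in(0,\infty)^{k+1}$: $O_0(t_1)=CT(t_1)$, $P_0(t_1)=T(t_1)^*$, and for $k\ge1$, $O_k(t)y=\sum_{n_1,\dots,n_k}CT(t_1)N_{n_1}T(t_2)\cdots N_{n_k}T(t_{k+1})y\otimes(\widehat e_{n_1}\otimes\dots\otimes\widehat e_{n_k})$, $P_k(t)y=\sum_{n_1,\dots,n_k}T(t_1)^*N_{n_1}^*\cdots T(t_k)^*N_{n_k}^*T(t_{k+1})^*y\otimes(\widehat e_{n_1}\otimes\dots\otimes\widehat e_{n_k})$. For a Hilbert space $K$, $F^n_k(K)=L^2((0,\infty)^k,K\otimes(\mathbb R^n)^{\otimes(k-1)})$ and $F^n(K)=\bigoplus_{k\ge1}F^n_k(K)$. Observability map $W:X\to F^n(\mathcal H)$, $Wx=(O_k(\cdot)x)_{k\ge0}$ with $O_k(\cdot)x\in F^n_{k+1}(\mathcal H)$. Reachability map $R:F^n(\mathbb R^n)\to X$, $R((f_k)_{k\ge0})=\sum_k\int_{(0,\infty)^{k+1}}P_k(s)^*(B\otimes\mathrm{id})f_k(s)\,ds$, $f_k\in F^n_{k+1}(\mathbb R^n)$. Hankel operator $H=WR$. *)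

theory Defs
  imports "HOL-Analysis.Analysis"
begin

definition adj :: "('a::real_inner \<Rightarrow> 'b::real_inner) \<Rightarrow> 'b \<Rightarrow> 'a" where
  "adj f y = (THE z. \<forall>x. inner (f x) y = inner x z)"

definition orth_proj :: "'a::real_inner set \<Rightarrow> 'a \<Rightarrow> 'a" where
  "orth_proj V x = (THE y. y \<in> V \<and> (\<forall>v\<in>V. inner (x - y) v = 0))"

definition orthonormal_set :: "'a::real_inner set \<Rightarrow> bool" where
  "orthonormal_set E \<longleftrightarrow> (\<forall>e\<in>E. norm e = 1) \<and> (\<forall>e\<in>E. \<forall>e'\<in>E. e \<noteq> e' \<longrightarrow> inner e e' = 0)"

text \<open>An element f of F^n(K) is represented by its components: f k s idx is the
 K-coordinate of the k-th component (k \<ge> 0) at times s = (s 0, ..., s k) in (0,\<infinity>)^(k+1),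
 in direction e_(idx 0) \<otimes> ... \<otimes> e_(idx (d k - 1)) of the tensor factor (R^n)^\<otimes>(d k).
 Indices are 0-based: idx i \<in> {..<n}.\<close>

definition posM :: "nat \<Rightarrow> (nat \<Rightarrow> real) measure" where
  "posM k = PiM {..k} (\<lambda>_. restrict_space lborel {0<..})"

definition idxs :: "nat \<Rightarrow> nat \<Rightarrow> (nat \<Rightarrow> nat) set" where
  "idxs d n = PiE {..<d} (\<lambda>_. {..<n})"

type_synonym 'k fock = "nat \<Rightarrow> (nat \<Rightarrow> real) \<Rightarrow> (nat \<Rightarrow> nat) \<Rightarrow> 'k"

definition fock_norm2 :: "nat \<Rightarrow> (nat \<Rightarrow> nat) \<Rightarrow> 'k::real_normed_vector fock \<Rightarrow> ennreal" where
  "fock_norm2 n d f = (\<Sum>k. \<Sum>idx\<in>idxs (d k) n. \<integral>\<^sup>+ s. ennreal ((norm (f k s idx))\<^sup>2) \<partial>posM k)"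

definition fock_space :: "nat \<Rightarrow> (nat \<Rightarrow> nat) \<Rightarrow> 'k::real_normed_vector fock set" where
  "fock_space n d = {f. (\<forall>k. \<forall>idx\<in>idxs (d k) n. (\<lambda>s. f k s idx) \<in> borel_measurable (posM k))
                       \<and> fock_norm2 n d f < \<infinity>}"

definition fock_norm :: "nat \<Rightarrow> (nat \<Rightarrow> nat) \<Rightarrow> 'k::real_normed_vector fock \<Rightarrow> real" where
  "fock_norm n d f = sqrt (enn2real (fock_norm2 n d f))"

definition fock_inner :: "nat \<Rightarrow> (nat \<Rightarrow> nat) \<Rightarrow> 'k::real_inner fock \<Rightarrow> 'k fock \<Rightarrow> real" where
  "fock_inner n d f g = (\<Sum>k. \<Sum>idx\<in>idxs (d k) n. \<integral> s. inner (f k s idx) (g k s idx) \<partial>posM k)"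

definition fock_orthonormal :: "nat \<Rightarrow> (nat \<Rightarrow> nat) \<Rightarrow> 'k::real_inner fock set \<Rightarrow> bool" where
  "fock_orthonormal n d E \<longleftrightarrow> E \<subseteq> fock_space n d \<and> (\<forall>e\<in>E. fock_inner n d e e = 1)
     \<and> (\<forall>e\<in>E. \<forall>e'\<in>E. e \<noteq> e' \<longrightarrow> fock_inner n d e e' = 0)"

text \<open>Squared Hilbert--Schmidt norm of an operator F^n(K1) \<rightarrow> F^n(K2):
  sum of squared norms of the images of an orthonormal basis, written as the supremum over
  orthonormal families (which is attained at any orthonormal basis).\<close>
definition hs_norm2 :: "nat \<Rightarrow> (nat \<Rightarrow> nat) \<Rightarrow> (nat \<Rightarrow> nat) \<Rightarrow>
    ('k1::real_inner fock \<Rightarrow> 'k2::real_inner fock) \<Rightarrow> ennreal" where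
  "hs_norm2 n d1 d2 L = (SUP E\<in>{E. fock_orthonormal n d1 E}.
       (\<Sum>\<^sub>\<infinity>e\<in>E. ennreal ((fock_norm n d2 (L e))\<^sup>2)))"

definition nuclear_norm :: "nat \<Rightarrow> (nat \<Rightarrow> nat) \<Rightarrow> (nat \<Rightarrow> nat) \<Rightarrow>
    ('k1::real_inner fock \<Rightarrow> 'k2::real_inner fock) \<Rightarrow> ennreal" where
  "nuclear_norm n d1 d2 L = Inf {(\<Sum>i. ennreal (fock_norm n d1 (a i) * fock_norm n d2 (b i))) | a b.
      (\<forall>i. a i \<in> fock_space n d1 \<and> b i \<in> fock_space n d2) \<and>
      (\<forall>z\<in>fock_space n d1. (\<lambda>m. fock_norm n d2
          (\<lambda>k s idx. L z k s idx - (\<Sum>i<m. fock_inner n d1 z (a i) *\<^sub>R b i k s idx))) \<longlonglongrightarrow> 0)}"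

fun obs_chain :: "(real \<Rightarrow> 'x \<Rightarrow> 'x) \<Rightarrow> (nat \<Rightarrow> 'x \<Rightarrow> 'x) \<Rightarrow> nat \<Rightarrow> (nat \<Rightarrow> real) \<Rightarrow> (nat \<Rightarrow> nat) \<Rightarrow> 'x \<Rightarrow> 'x" where
  "obs_chain T N 0 s idx = T (s 0)"
| "obs_chain T N (Suc k) s idx = obs_chain T N k s idx \<circ> N (idx k) \<circ> T (s (Suc k))"

text \<open>reach_chain k s idx = T(s k) N(idx (k-1)) ... N(idx 0) T(s 0); this is P_k(s)^* applied
  to the tensor z \<otimes> e_(idx 0) \<otimes> ... \<otimes> e_(idx (k-1)).\<close>
fun reach_chain :: "(real \<Rightarrow> 'x \<Rightarrow> 'x) \<Rightarrow> (nat \<Rightarrow> 'x \<Rightarrow> 'x) \<Rightarrow> nat \<Rightarrow> (nat \<Rightarrow> real) \<Rightarrow> (nat \<Rightarrow> nat) \<Rightarrow> 'x \<Rightarrow> 'x" where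
  "reach_chain T N 0 s idx = T (s 0)"
| "reach_chain T N (Suc k) s idx = T (s (Suc k)) \<circ> N (idx k) \<circ> reach_chain T N k s idx"

text \<open>Observability map W : X \<rightarrow> F^n(H) (component k has k tensor indices).\<close>
definition obsW :: "(real \<Rightarrow> 'x \<Rightarrow> 'x) \<Rightarrow> (nat \<Rightarrow> 'x \<Rightarrow> 'x) \<Rightarrow> ('x \<Rightarrow> 'h) \<Rightarrow> 'x \<Rightarrow> 'h fock" where
  "obsW T N C x = (\<lambda>k s idx. C (obs_chain T N k s idx x))"

text \<open>Reachability map with input operator (P B) u = \<Sum>_j u_j P \<psi>_j, on F^n(R^n):
  an input f has k+1 tensor indices in component k, idx 0 being the R^n input coordinate.\<close>
definition reachR :: "nat \<Rightarrow> (real \<Rightarrow> 'x::{real_normed_vector,second_countable_topology,banach} \<Rightarrow> 'x) \<Rightarrow> (nat \<Rightarrow> 'x \<Rightarrow> 'x)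
     \<Rightarrow> (nat \<Rightarrow> 'x) \<Rightarrow> ('x \<Rightarrow> 'x) \<Rightarrow> real fock \<Rightarrow> 'x" where
  "reachR n T N \<psi> P f = (\<Sum>k. \<integral> s. (\<Sum>idx\<in>idxs (Suc k) n.
        f k s idx *\<^sub>R reach_chain T N k s (\<lambda>i. idx (Suc i)) (P (\<psi> (idx 0)))) \<partial>posM k)"

end

theory Submission
  imports Defs
begin

text \<open>Replacing \<open>B\<close> by \<open>P\<^sub>V B\<close> replaces the input vectors \<open>\<psi>\<^sub>j\<close> by \<open>P\<^sub>V \<psi>\<^sub>j\<close>, and the
  reachability map is linear in them: \<open>H\<^sub>V - H = W R\<^sub>\<delta>\<close>, where \<open>R\<^sub>\<delta> f = \<Sum>\<^sub>k \<integral> f\<^sub>k(s) r\<^sub>k(s)\<close>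
  pairs the input with the kernel \<open>r\<^sub>k(s) = P\<^sub>k(s)\<^sup>* \<delta>\<close> of the vectors \<open>\<delta>\<^sub>j = P\<^sub>V \<psi>\<^sub>j - \<psi>\<^sub>j\<close>.
  The exponential bound on the semigroup bounds the \<open>k\<close>-th level of \<open>\<parallel>r\<parallel>\<^sup>2\<close> by
  \<open>\<kappa> (\<kappa> \<Gamma>\<^sup>2)\<^sup>k \<Sum>\<^sub>j \<parallel>\<delta>\<^sub>j\<parallel>\<^sup>2\<close> with \<open>\<kappa> = M\<^sup>2/(2\<nu>)\<close>; the smallness condition \<open>\<kappa> \<Gamma>\<^sup>2 < 1\<close> makes the
  geometric series converge, and \<open>\<delta> \<rightarrow> 0\<close> since \<open>P\<^sub>V\<^sub>i \<rightarrow> id\<close> strongly.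

  Let \<open>(u\<^sub>m)\<close> be an orthonormal basis of \<open>X\<close> (Gram--Schmidt applied to a dense sequence). Then
  \<open>W R\<^sub>\<delta> f = \<Sum>\<^sub>m \<langle>f, \<langle>r, u\<^sub>m\<rangle>\<rangle> W u\<^sub>m\<close>, so by Cauchy--Schwarz the nuclear norm of \<open>W R\<^sub>\<delta>\<close> is at most
  \<open>\<parallel>r\<parallel> \<parallel>W\<parallel>\<^sub>H\<^sub>S\<close>; and by Parseval in \<open>X\<close> and Bessel in the Fock space its Hilbert--Schmidt norm is at
  most \<open>\<parallel>W\<parallel> \<parallel>r\<parallel>\<close>.\<close>

lemma suminf_ennreal_mult_le:
  fixes a b :: "nat \<Rightarrow> real"
  assumes "\<And>i. 0 \<le> a i" "\<And>i. 0 \<le> b i"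
    and "\<And>m. (\<Sum>i<m. (a i)\<^sup>2) \<le> A" "\<And>m. (\<Sum>i<m. (b i)\<^sup>2) \<le> B"
  shows "(\<Sum>i. ennreal (a i * b i)) \<le> ennreal (sqrt A * sqrt B)"
  unfolding suminf_eq_SUP
proof (rule SUP_least)
  fix m
  have "(\<Sum>i<m. a i * b i) \<le> L2_set a {..<m} * L2_set b {..<m}"
    using L2_set_mult_ineq[of a b "{..<m}"] assms(1,2) by simp
  also have "\<dots> \<le> sqrt A * sqrt B"
  proof (rule mult_mono)
    show "L2_set a {..<m} \<le> sqrt A" "L2_set b {..<m} \<le> sqrt B"
      unfolding L2_set_def using assms(3,4) by (simp_all add: real_sqrt_le_mono)
    show "0 \<le> sqrt A" using assms(3)[of 0] by simp
  qed (rule L2_set_nonneg)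
  finally show "(\<Sum>i<m. ennreal (a i * b i)) \<le> ennreal (sqrt A * sqrt B)"
    using assms(1,2) by (simp add: sum_ennreal ennreal_leI)
qed

lemma ennreal_tendsto_0_le:
  fixes f :: "nat \<Rightarrow> ennreal"
  assumes "\<And>i. f i \<le> ennreal (g i)" "g \<longlonglongrightarrow> 0"
  shows "f \<longlonglongrightarrow> 0"
proof (rule tendsto_sandwich[OF _ _ tendsto_const])
  show "(\<lambda>i. ennreal (g i)) \<longlonglongrightarrow> 0" using tendsto_ennrealI[OF assms(2)] by simp
qed (simp_all add: assms(1))

lemma sum_norm_diff_tendsto_0:
  assumes "\<And>j. j < n \<Longrightarrow> (\<lambda>i. p i j) \<longlonglongrightarrow> q j"
  shows "(\<lambda>i. \<Sum>j<n. norm (p i j - q j) ^ 2) \<longlonglongrightarrow> 0"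
proof -
  have "(\<lambda>i. \<Sum>j<n. norm (p i j - q j) ^ 2) \<longlonglongrightarrow> (\<Sum>j<n. norm (q j - q j) ^ 2)"
    using assms by (intro tendsto_sum tendsto_power tendsto_norm tendsto_diff tendsto_const) auto
  then show ?thesis by simp
qed

section \<open>Projections and adjoints in real Hilbert spaces\<close>

lemma apollonius:
  fixes x a b :: "'a::real_inner"
  shows "norm (a - b)^2 = 2 * norm (x - a)^2 + 2 * norm (x - b)^2 - 4 * norm (x - midpoint a b)^2"
proof -
  have "(x - a) + (x - b) = 2 *\<^sub>R (x - midpoint a b)"
    by (simp add: midpoint_def scaleR_2 algebra_simps)
  then have "norm ((x - a) + (x - b))^2 = 4 * norm (x - midpoint a b)^2"
    by (simp add: power_mult_distrib)
  moreover have "norm ((x - a) + (x - b))^2 + norm (a - b)^2 = 2 * norm (x - a)^2 + 2 * norm (x - b)^2"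
    by (simp add: power2_norm_eq_inner inner_add_left inner_add_right inner_diff_left
        inner_diff_right inner_commute)
  ultimately show ?thesis by linarith
qed

lemma convex_minimising_sequence_Cauchy:
  fixes S :: "'a::real_inner set"
  assumes "convex S" and v: "\<And>m. v m \<in> S" and d: "\<And>w. w \<in> S \<Longrightarrow> d \<le> norm (x - w)"
    and lim: "(\<lambda>m. norm (x - v m)) \<longlonglongrightarrow> d"
  shows "Cauchy v"
proof (rule metric_CauchyI)
  fix e :: real assume "0 < e"
  have excess: "(\<lambda>m. norm (x - v m)^2 - d^2) \<longlonglongrightarrow> 0"
    using tendsto_diff[OF tendsto_power[OF lim, of 2] tendsto_const[of "d^2"]] by simp
  obtain m0 where m0: "\<And>m. m \<ge> m0 \<Longrightarrow> \<bar>norm (x - v m)^2 - d^2\<bar> < e^2 / 4"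
    using LIMSEQ_D[OF excess, of "e^2 / 4"] \<open>0 < e\<close> by auto
  have "0 \<le> d" by (rule LIMSEQ_le_const[OF lim]) simp
  \<comment> \<open>by Apollonius, since the midpoints stay in \<open>S\<close>\<close>
  have "dist (v m) (v l) < e" if "m \<ge> m0" "l \<ge> m0" for m l
  proof -
    have "d \<le> norm (x - midpoint (v m) (v l))"
      using convexD[OF assms(1) v v, of "1/2" "1/2"]
      by (intro d) (simp add: midpoint_def scaleR_add_right)
    then have "d^2 \<le> norm (x - midpoint (v m) (v l))^2" using \<open>0 \<le> d\<close> by (rule power_mono)
    then have "norm (v m - v l)^2 < e^2"
      using apollonius[of "v m" "v l" x] m0[OF that(1)] m0[OF that(2)] by linarith
    then show ?thesis using \<open>0 < e\<close> by (simp add: dist_norm power_less_imp_less_base)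
  qed
  then show "\<exists>M. \<forall>m\<ge>M. \<forall>l\<ge>M. dist (v m) (v l) < e" by blast
qed

lemma closest_point_exists_complete:
  fixes S :: "'a::{real_inner,complete_space} set"
  assumes "convex S" "closed S" "S \<noteq> {}"
  obtains y where "y \<in> S" "\<And>w. w \<in> S \<Longrightarrow> norm (x - y) \<le> norm (x - w)"
proof -
  define d where "d = (INF w\<in>S. norm (x - w))"
  have bdd: "bdd_below ((\<lambda>w. norm (x - w)) ` S)" by (rule bdd_belowI2[of _ 0]) simp
  have d_le: "d \<le> norm (x - w)" if "w \<in> S" for w
    unfolding d_def using bdd that by (rule cINF_lower)
  have "\<exists>v\<in>S. norm (x - v) < d + 1 / Suc m" for m :: nat
    using cINF_less_iff[OF \<open>S \<noteq> {}\<close> bdd, of "d + 1 / Suc m"] by (simp add: d_def)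
  then obtain v where v: "\<And>m. v m \<in> S" "\<And>m. norm (x - v m) < d + 1 / Suc m" by metis
  have lim: "(\<lambda>m. norm (x - v m)) \<longlonglongrightarrow> d"
  proof (rule tendsto_sandwich[of "\<lambda>_. d" _ _ "\<lambda>m. d + 1 / Suc m"])
    show "\<forall>\<^sub>F m in sequentially. d \<le> norm (x - v m)" using d_le v(1) by simp
    show "\<forall>\<^sub>F m in sequentially. norm (x - v m) \<le> d + 1 / Suc m"
      by (intro always_eventually allI less_imp_le v(2))
    show "(\<lambda>m. d + 1 / real (Suc m)) \<longlonglongrightarrow> d"
      using tendsto_add[OF tendsto_const LIMSEQ_inverse_real_of_nat] by (simp add: inverse_eq_divide)
  qed simp
  obtain y where vy: "v \<longlonglongrightarrow> y"
    using convex_minimising_sequence_Cauchy[OF assms(1) v(1) d_le lim] Cauchy_convergent_iff convergent_def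
    by blast
  have "(\<lambda>m. norm (x - v m)) \<longlonglongrightarrow> norm (x - y)" by (intro tendsto_intros vy)
  then have "norm (x - y) = d" using lim LIMSEQ_unique by blast
  then show ?thesis using that closed_sequentially[OF assms(2) v(1) vy] d_le by auto
qed

lemma closest_point_subspace_orthogonal:
  fixes V :: "'a::real_inner set"
  assumes "subspace V" "y \<in> V" and closest: "\<And>v. v \<in> V \<Longrightarrow> norm (x - y) \<le> norm (x - v)"
    and "w \<in> V"
  shows "inner (x - y) w = 0"
proof (cases "w = 0")
  case False
  define c where "c = inner (x - y) w"
  define t where "t = c / inner w w"
  have ww: "inner w w > 0" using False by simp
  have "y + t *\<^sub>R w \<in> V" using assms by (simp add: subspace_add subspace_mul)
  then have "norm (x - y)^2 \<le> norm ((x - y) - t *\<^sub>R w)^2"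
    using closest by (simp add: power_mono algebra_simps)
  also have "\<dots> = norm (x - y)^2 - 2 * t * c + t^2 * inner w w"
    unfolding power2_norm_eq_inner
    by (simp add: inner_diff_left inner_diff_right inner_commute c_def power2_eq_square algebra_simps)
  also have "\<dots> = norm (x - y)^2 - c^2 / inner w w"
    using ww by (simp add: t_def power2_eq_square field_simps)
  finally have "c^2 \<le> 0" using ww by (simp add: divide_le_0_iff)
  then show ?thesis by (simp add: c_def)
qed simp

lemma orth_proj:
  fixes V :: "'a::{real_inner,complete_space} set"
  assumes "subspace V" "closed V"
  shows orth_proj_in: "orth_proj V x \<in> V"
    and orth_proj_orthogonal: "\<And>v. v \<in> V \<Longrightarrow> inner (x - orth_proj V x) v = 0"
proof -
  obtain y where y: "y \<in> V" "\<And>w. w \<in> V \<Longrightarrow> norm (x - y) \<le> norm (x - w)"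
    using closest_point_exists_complete[of V] assms subspace_imp_convex subspace_0 by blast
  have unique: "y' = y" if "y' \<in> V" "\<forall>v\<in>V. inner (x - y') v = 0" for y'
  proof -
    have "y - y' \<in> V" using y(1) that(1) assms(1) by (simp add: subspace_diff)
    then have "inner (x - y') (y - y') - inner (x - y) (y - y') = 0"
      using that closest_point_subspace_orthogonal[OF assms(1) y] by simp
    then have "inner (y - y') (y - y') = 0" by (simp add: inner_diff_left inner_diff_right algebra_simps)
    then show ?thesis by simp
  qed
  have "\<exists>!y. y \<in> V \<and> (\<forall>v\<in>V. inner (x - y) v = 0)"
    using y closest_point_subspace_orthogonal[OF assms(1) y] unique by blast
  then have "orth_proj V x \<in> V \<and> (\<forall>v\<in>V. inner (x - orth_proj V x) v = 0)"
    unfolding orth_proj_def by (rule theI')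
  then show "orth_proj V x \<in> V" "\<And>v. v \<in> V \<Longrightarrow> inner (x - orth_proj V x) v = 0" by auto
qed

lemma orth_proj_closest:
  fixes V :: "'a::{real_inner,complete_space} set"
  assumes "subspace V" "closed V" "v \<in> V"
  shows "norm (x - orth_proj V x) \<le> norm (x - v)"
proof -
  let ?p = "orth_proj V x"
  have "?p - v \<in> V" using orth_proj_in[OF assms(1,2)] assms by (simp add: subspace_diff)
  then have "inner (x - ?p) (?p - v) = 0" by (rule orth_proj_orthogonal[OF assms(1,2)])
  then have "norm (x - v)^2 = norm (x - ?p)^2 + norm (?p - v)^2"
    using norm_add_Pythagorean[of "x - ?p" "?p - v"] by (simp add: orthogonal_def)
  then have "norm (x - ?p)^2 \<le> norm (x - v)^2" by simp
  then show ?thesis by (rule power2_le_imp_le) simp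
qed

lemma orth_proj_tendsto:
  fixes V :: "nat \<Rightarrow> 'a::{real_inner,complete_space} set"
  assumes "\<And>i. subspace (V i)" "\<And>i. closed (V i)" "incseq V" "closure (\<Union>i. V i) = UNIV"
  shows "(\<lambda>i. orth_proj (V i) x) \<longlonglongrightarrow> x"
proof (rule LIMSEQ_I)
  fix r :: real assume "0 < r"
  then obtain w j where w: "w \<in> V j" "dist w x < r"
    using closure_approachable[of x "\<Union>i. V i"] assms(4) by auto
  have "norm (orth_proj (V i) x - x) < r" if "j \<le> i" for i
  proof -
    have "w \<in> V i" using w(1) \<open>incseq V\<close> that by (auto simp: incseq_def)
    then have "norm (x - orth_proj (V i) x) \<le> norm (x - w)" by (rule orth_proj_closest[OF assms(1,2)])
    then show ?thesis using w(2) by (simp add: dist_norm norm_minus_commute)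
  qed
  then show "\<exists>no. \<forall>i\<ge>no. norm (orth_proj (V i) x - x) < r" by blast
qed

lemma riesz_representation:
  fixes f :: "'a::{real_inner,complete_space} \<Rightarrow> real"
  assumes "bounded_linear f"
  obtains z where "\<And>x. f x = inner x z"
proof (cases "\<forall>x. f x = 0")
  case True
  then show ?thesis by (intro that[of 0]) simp
next
  case False
  interpret f: bounded_linear f by fact
  define K where "K = {x. f x = 0}"
  have K: "subspace K" "closed K"
    unfolding K_def subspace_def
    by (simp add: f.add f.scaleR f.zero)
      (intro closed_Collect_eq continuous_intros f.continuous_on continuous_on_const)
  obtain x0 where "f x0 \<noteq> 0" using False by blast
  define x1 where "x1 = x0 /\<^sub>R f x0"
  have x1: "f x1 = 1" using \<open>f x0 \<noteq> 0\<close> by (simp add: x1_def f.scaleR)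
  define w where "w = x1 - orth_proj K x1"
  have "orth_proj K x1 \<in> K" by (rule orth_proj_in[OF K])
  then have fw: "f w = 1" using x1 by (simp add: w_def f.diff K_def)
  have wK: "inner w k = 0" if "k \<in> K" for k
    using orth_proj_orthogonal[OF K that] by (simp add: w_def)
  have ww: "inner w w \<noteq> 0" using fw by (auto simp: f.zero)
  have inner_w: "inner x w = f x * inner w w" for x
  proof -
    have "x - f x *\<^sub>R w \<in> K" by (simp add: K_def f.diff f.scaleR fw)
    then have "inner w (x - f x *\<^sub>R w) = 0" by (rule wK)
    then show ?thesis by (simp add: inner_diff_right inner_commute)
  qed
  have "f x = inner x (w /\<^sub>R inner w w)" for x using ww inner_w[of x] by simp
  then show ?thesis by (rule that)
qed

lemma adj_inner:
  fixes f :: "'a::{real_inner,complete_space} \<Rightarrow> 'b::real_inner"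
  assumes "bounded_linear f"
  shows "inner (f x) y = inner x (adj f y)"
proof -
  have "bounded_linear (\<lambda>x. inner (f x) y)"
    using bounded_linear_compose[OF bounded_linear_inner_left assms] by (simp add: o_def)
  then obtain z where z: "\<And>x. inner (f x) y = inner x z" using riesz_representation by metis
  have "\<exists>!z. \<forall>x. inner (f x) y = inner x z"
  proof (rule ex1I[of _ z])
    fix z' assume "\<forall>x. inner (f x) y = inner x z'"
    then have "inner (z' - z) (z' - z) = 0" using z by (simp add: inner_diff_right inner_diff_left)
    then show "z' = z" by simp
  qed (use z in simp)
  then show ?thesis unfolding adj_def by (rule theI'[THEN spec])
qed

lemma bounded_linear_adj:
  fixes f :: "'a::{real_inner,complete_space} \<Rightarrow> 'b::real_inner"
  assumes f: "bounded_linear f"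
  shows "bounded_linear (adj f)"
proof -
  have eq: "a = b" if "\<And>x. inner x a = inner x b" for a b :: 'a
  proof -
    have "inner (a - b) (a - b) = 0" using that by (simp add: inner_diff_left inner_diff_right)
    then show ?thesis by simp
  qed
  show ?thesis
  proof (rule bounded_linear_intro[where K = "onorm f"])
    show "adj f (a + b) = adj f a + adj f b" for a b
      by (rule eq) (simp add: inner_add_right adj_inner[OF f, symmetric])
    show "adj f (r *\<^sub>R a) = r *\<^sub>R adj f a" for r a
      by (rule eq) (simp add: adj_inner[OF f, symmetric])
    show "norm (adj f y) \<le> norm y * onorm f" for y
    proof -
      have "norm (adj f y)^2 = inner (f (adj f y)) y" by (simp add: adj_inner[OF f] power2_norm_eq_inner)
      also have "\<dots> \<le> norm (f (adj f y)) * norm y" by (rule norm_cauchy_schwarz)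
      also have "\<dots> \<le> onorm f * norm (adj f y) * norm y"
        by (intro mult_right_mono onorm[OF f]) auto
      finally have "norm (adj f y) * norm (adj f y) \<le> (norm y * onorm f) * norm (adj f y)"
        by (simp add: power2_eq_square algebra_simps)
      then show ?thesis
        using onorm_pos_le[OF f] by (cases "adj f y = 0") simp_all
    qed
  qed
qed

lemma onorm_power2_le_onorm_comp_adj:
  fixes N :: "'a::{real_inner,complete_space} \<Rightarrow> 'a"
  assumes N: "bounded_linear N"
  shows "onorm N ^ 2 \<le> onorm (N \<circ> adj N)"
proof -
  let ?A = "adj N"
  have NA: "bounded_linear (N \<circ> ?A)"
    using bounded_linear_compose[OF N bounded_linear_adj[OF N]] by (simp add: o_def)
  define s where "s = sqrt (onorm (N \<circ> ?A))"
  have s: "0 \<le> s" "s^2 = onorm (N \<circ> ?A)" by (simp_all add: s_def onorm_pos_le[OF NA])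
  have A: "norm (?A y) \<le> s * norm y" for y
  proof -
    have "norm (?A y)^2 = inner (N (?A y)) y" by (simp add: adj_inner[OF N] power2_norm_eq_inner)
    also have "\<dots> \<le> norm ((N \<circ> ?A) y) * norm y" using norm_cauchy_schwarz by simp
    also have "\<dots> \<le> onorm (N \<circ> ?A) * norm y * norm y"
      by (intro mult_right_mono onorm[OF NA]) auto
    also have "\<dots> = (s * norm y)^2" by (simp add: s(2)[symmetric] power2_eq_square)
    finally show ?thesis using s(1) by (simp add: power2_le_iff_abs_le)
  qed
  have "norm (N x) \<le> s * norm x" for x
  proof -
    have "norm (N x)^2 = inner x (?A (N x))" by (simp add: adj_inner[OF N, symmetric] power2_norm_eq_inner)
    also have "\<dots> \<le> norm x * norm (?A (N x))" by (rule norm_cauchy_schwarz)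
    also have "\<dots> \<le> norm x * (s * norm (N x))" by (intro mult_left_mono A) auto
    finally have "norm (N x) * norm (N x) \<le> (s * norm x) * norm (N x)"
      by (simp add: power2_eq_square algebra_simps)
    then show ?thesis using s(1) by (cases "N x = 0") simp_all
  qed
  then have "onorm N \<le> s" by (rule onorm_bound[OF s(1)])
  then show ?thesis using s onorm_pos_le[OF N] by (metis power_mono)
qed

section \<open>Orthonormal expansions in separable inner product spaces\<close>

text \<open>Zero vectors are allowed: Gram--Schmidt turns linearly dependent input vectors into \<open>0\<close>.\<close>
definition orthonormal_upto :: "(nat \<Rightarrow> 'a::real_inner) \<Rightarrow> nat \<Rightarrow> bool" where
  "orthonormal_upto u M \<longleftrightarrow> (\<forall>i<M. \<forall>j<M. inner (u i) (u j) = (if i = j \<and> u i \<noteq> 0 then 1 else 0))"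

lemma orthonormal_upto_inner_sum:
  assumes "orthonormal_upto u M" "i < M"
  shows "inner (\<Sum>j<M. c j *\<^sub>R u j) (u i) = c i * inner (u i) (u i)"
proof -
  have "inner (\<Sum>j<M. c j *\<^sub>R u j) (u i) = (\<Sum>j<M. c j * inner (u j) (u i))"
    by (simp add: inner_sum_left)
  also have "\<dots> = (\<Sum>j\<in>{i}. c j * inner (u j) (u i))"
    using assms by (intro sum.mono_neutral_right) (auto simp: orthonormal_upto_def)
  finally show ?thesis by simp
qed

lemma orthonormal_upto_residual_orthogonal:
  assumes "orthonormal_upto u M" "i < M"
  shows "inner (x - (\<Sum>j<M. inner x (u j) *\<^sub>R u j)) (u i) = 0"
proof -
  have "inner x (u i) * inner (u i) (u i) = inner x (u i)"
    using assms by (cases "u i = 0") (auto simp: orthonormal_upto_def)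
  then show ?thesis using orthonormal_upto_inner_sum[OF assms] by (simp add: inner_diff_left)
qed

lemma orthonormal_upto_residual_orthogonal_sum:
  assumes "orthonormal_upto u M"
  shows "inner (x - (\<Sum>j<M. inner x (u j) *\<^sub>R u j)) (\<Sum>j<M. c j *\<^sub>R u j) = 0"
  using orthonormal_upto_residual_orthogonal[OF assms] by (simp add: inner_sum_right)

lemma orthonormal_upto_best_approximation:
  assumes "orthonormal_upto u M"
  shows "norm (x - (\<Sum>j<M. inner x (u j) *\<^sub>R u j)) \<le> norm (x - (\<Sum>j<M. c j *\<^sub>R u j))"
proof -
  let ?Q = "\<Sum>j<M. inner x (u j) *\<^sub>R u j" and ?v = "\<Sum>j<M. c j *\<^sub>R u j"
  have "?Q - ?v = (\<Sum>j<M. (inner x (u j) - c j) *\<^sub>R u j)"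
    by (simp add: sum_subtractf scaleR_diff_left)
  then have "inner (x - ?Q) (?Q - ?v) = 0"
    using orthonormal_upto_residual_orthogonal_sum[OF assms] by simp
  then have "norm ((x - ?Q) + (?Q - ?v))^2 = norm (x - ?Q)^2 + norm (?Q - ?v)^2"
    using norm_add_Pythagorean[of "x - ?Q" "?Q - ?v"] by (simp add: orthogonal_def)
  then have "norm (x - ?Q)^2 \<le> norm (x - ?v)^2" by simp
  then show ?thesis by (rule power2_le_imp_le) simp
qed

lemma orthonormal_upto_pythagoras:
  assumes "orthonormal_upto u M"
  shows "norm x ^ 2 = norm (x - (\<Sum>j<M. inner x (u j) *\<^sub>R u j))^2 + (\<Sum>j<M. (inner x (u j))^2)"
proof -
  let ?Q = "\<Sum>j<M. inner x (u j) *\<^sub>R u j"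
  have "inner ?Q (u i) = inner x (u i)" if "i < M" for i
    using orthonormal_upto_residual_orthogonal[OF assms that, of x] by (simp add: inner_diff_left)
  then have "inner ?Q ?Q = (\<Sum>i<M. (inner x (u i))^2)"
    by (simp add: inner_sum_right power2_eq_square)
  moreover have "inner (x - ?Q) ?Q = 0"
    using orthonormal_upto_residual_orthogonal_sum[OF assms] .
  then have "norm ((x - ?Q) + ?Q)^2 = norm (x - ?Q)^2 + inner ?Q ?Q"
    using norm_add_Pythagorean[of "x - ?Q" ?Q] by (simp add: orthogonal_def power2_norm_eq_inner)
  ultimately show ?thesis by simp
qed

function gram_schmidt :: "(nat \<Rightarrow> 'a::real_inner) \<Rightarrow> nat \<Rightarrow> 'a" where
  "gram_schmidt d m = sgn (d m - (\<Sum>j<m. inner (d m) (gram_schmidt d j) *\<^sub>R gram_schmidt d j))"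
  by auto
termination by (relation "inv_image less_than snd") auto

declare gram_schmidt.simps [simp del]

lemma orthonormal_upto_gram_schmidt: "orthonormal_upto (gram_schmidt d) M"
proof (induction M)
  case 0
  then show ?case by (simp add: orthonormal_upto_def)
next
  case (Suc m)
  let ?u = "gram_schmidt d"
  define w where "w = d m - (\<Sum>j<m. inner (d m) (?u j) *\<^sub>R ?u j)"
  have um: "?u m = sgn w" by (simp add: gram_schmidt.simps[of d m] w_def)
  have orth: "inner (?u m) (?u i) = 0" if "i < m" for i
    using orthonormal_upto_residual_orthogonal[OF Suc that, of "d m"]
    by (simp add: um w_def[symmetric] sgn_div_norm)
  have unit: "inner (?u m) (?u m) = (if ?u m \<noteq> 0 then 1 else 0)"
    by (simp add: um norm_sgn sgn_zero_iff flip: power2_norm_eq_inner)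
  show ?case
    unfolding orthonormal_upto_def
  proof (intro allI impI)
    fix i j assume "i < Suc m" "j < Suc m"
    then show "inner (?u i) (?u j) = (if i = j \<and> ?u i \<noteq> 0 then 1 else 0)"
      using Suc unit orth[of i] orth[of j]
      by (cases "i = m"; cases "j = m") (auto simp: orthonormal_upto_def inner_commute)
  qed
qed

lemma gram_schmidt_span:
  assumes "m < M"
  obtains c where "d m = (\<Sum>j<M. c j *\<^sub>R gram_schmidt d j)"
proof -
  let ?u = "gram_schmidt d"
  define w where "w = d m - (\<Sum>j<m. inner (d m) (?u j) *\<^sub>R ?u j)"
  have w: "w = norm w *\<^sub>R ?u m"
    by (cases "w = 0") (simp_all add: gram_schmidt.simps[of d m] w_def[symmetric] sgn_div_norm)
  define c where "c j = (if j < m then inner (d m) (?u j) else if j = m then norm w else 0)" for j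
  have "(\<Sum>j<M. c j *\<^sub>R ?u j) = (\<Sum>j<Suc m. c j *\<^sub>R ?u j)"
    using assms by (intro sum.mono_neutral_right) (auto simp: c_def)
  also have "\<dots> = d m" using w by (simp add: c_def w_def)
  finally show ?thesis using that by metis
qed

lemma orthonormal_upto_parseval:
  assumes u: "\<And>M. orthonormal_upto u M" and x: "(\<lambda>M. \<Sum>j<M. inner x (u j) *\<^sub>R u j) \<longlonglongrightarrow> x"
  shows "(\<lambda>j. (inner x (u j))^2) sums (norm x ^ 2)"
proof -
  have "(\<lambda>M. x - (\<Sum>j<M. inner x (u j) *\<^sub>R u j)) \<longlonglongrightarrow> x - x"
    by (rule tendsto_diff[OF tendsto_const x])
  from tendsto_diff[OF tendsto_const[of "norm x ^ 2"] tendsto_power[OF tendsto_norm[OF this], of 2]]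
  have "(\<lambda>M. norm x ^ 2 - norm (x - (\<Sum>j<M. inner x (u j) *\<^sub>R u j))^2) \<longlonglongrightarrow> norm x ^ 2 - norm (x - x)^2" .
  moreover have "norm x ^ 2 - norm (x - (\<Sum>j<M. inner x (u j) *\<^sub>R u j))^2 = (\<Sum>j<M. (inner x (u j))^2)" for M
    using orthonormal_upto_pythagoras[OF u, of x M] by linarith
  ultimately show ?thesis unfolding sums_def by simp
qed

lemma dense_sequence_exists:
  obtains d :: "nat \<Rightarrow> 'a::{metric_space,second_countable_topology}"
  where "\<And>x e. 0 < e \<Longrightarrow> \<exists>m. dist x (d m) < e"
proof -
  obtain D :: "'a set" where D: "countable D" "\<And>U. open U \<Longrightarrow> U \<noteq> {} \<Longrightarrow> \<exists>y\<in>D. y \<in> U"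
    using countable_dense_exists by blast
  have "\<exists>m. dist x (from_nat_into D m) < e" if "0 < e" for x e
  proof -
    have "\<exists>y\<in>D. dist x y < e" using D(2)[of "ball x e"] that by auto
    then obtain y where y: "y \<in> D" "dist x y < e" by blast
    then obtain m where "from_nat_into D m = y" using from_nat_into_surj[OF D(1) y(1)] by blast
    then show ?thesis using y(2) by auto
  qed
  then show ?thesis by (rule that)
qed

text \<open>The partial sums are best approximations, so eventually they beat any given term of the
  dense sequence.\<close>
lemma gram_schmidt_expansion:
  fixes d :: "nat \<Rightarrow> 'a::real_inner"
  assumes dense: "\<And>e. 0 < e \<Longrightarrow> \<exists>m. dist x (d m) < e"
  shows "(\<lambda>M. \<Sum>j<M. inner x (gram_schmidt d j) *\<^sub>R gram_schmidt d j) \<longlonglongrightarrow> x"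
proof -
  let ?u = "gram_schmidt d"
  have "(\<lambda>M. norm (x - (\<Sum>j<M. inner x (?u j) *\<^sub>R ?u j))) \<longlonglongrightarrow> 0"
  proof (rule LIMSEQ_I)
    fix r :: real assume "0 < r"
    then obtain m where m: "dist x (d m) < r" using dense by blast
    have "norm (x - (\<Sum>j<M. inner x (?u j) *\<^sub>R ?u j)) < r" if M: "m < M" for M
    proof -
      obtain c where "d m = (\<Sum>j<M. c j *\<^sub>R ?u j)" by (rule gram_schmidt_span[OF M])
      then have "norm (x - (\<Sum>j<M. inner x (?u j) *\<^sub>R ?u j)) \<le> norm (x - d m)"
        using orthonormal_upto_best_approximation[OF orthonormal_upto_gram_schmidt, of x d M c] by simp
      then show ?thesis using m by (simp add: dist_norm)
    qed
    then show "\<exists>no. \<forall>M\<ge>no. norm (norm (x - (\<Sum>j<M. inner x (?u j) *\<^sub>R ?u j)) - 0) < r"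
      by (intro exI[of _ "Suc m"]) auto
  qed
  then have "(\<lambda>M. x - (\<Sum>j<M. inner x (?u j) *\<^sub>R ?u j)) \<longlonglongrightarrow> 0"
    by (simp only: tendsto_norm_zero_iff)
  from tendsto_diff[OF tendsto_const[of x] this] show ?thesis by simp
qed

lemma orthonormal_expansion_exists:
  obtains u :: "nat \<Rightarrow> 'a::{real_inner,second_countable_topology}"
  where "\<And>M. orthonormal_upto u M"
    and "\<And>x. (\<lambda>M. \<Sum>j<M. inner x (u j) *\<^sub>R u j) \<longlonglongrightarrow> x"
proof -
  obtain d :: "nat \<Rightarrow> 'a" where d: "\<And>x e. 0 < e \<Longrightarrow> \<exists>m. dist x (d m) < e"
    using dense_sequence_exists by blast
  have "(\<lambda>M. \<Sum>j<M. inner x (gram_schmidt d j) *\<^sub>R gram_schmidt d j) \<longlonglongrightarrow> x" for x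
    using d by (rule gram_schmidt_expansion)
  with orthonormal_upto_gram_schmidt show ?thesis by (rule that)
qed

lemma finite_idxs [simp]: "finite (idxs d n)"
  by (simp add: idxs_def finite_PiE)

lemma idxs_less: "idx \<in> idxs k n \<Longrightarrow> j < k \<Longrightarrow> idx j < n"
  by (auto simp: idxs_def PiE_def Pi_def)

lemma idxs_Suc_tail: "idx \<in> idxs (Suc k) n \<Longrightarrow> (\<lambda>i. idx (Suc i)) \<in> idxs k n"
  by (auto simp: idxs_def PiE_def Pi_def extensional_def)

lemma bij_betw_idxs_Suc: "bij_betw (\<lambda>(j, f). case_nat j f) ({..<n} \<times> idxs k n) (idxs (Suc k) n)"
proof (rule bij_betwI[where g = "\<lambda>idx. (idx 0, \<lambda>i. idx (Suc i))"])
  show "(\<lambda>(j, f). case_nat j f) \<in> {..<n} \<times> idxs k n \<rightarrow> idxs (Suc k) n"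
    by (auto simp: idxs_def PiE_def Pi_def extensional_def split: nat.splits)
  show "(\<lambda>idx. (idx 0, \<lambda>i. idx (Suc i))) \<in> idxs (Suc k) n \<rightarrow> {..<n} \<times> idxs k n"
    using idxs_less idxs_Suc_tail by fastforce
  show "(\<lambda>idx. (idx 0, \<lambda>i. idx (Suc i))) (case x of (j, f) \<Rightarrow> case_nat j f) = x" for x
    by (cases x) auto
  show "(case (y 0, \<lambda>i. y (Suc i)) of (j, f) \<Rightarrow> case_nat j f) = y" for y
    by (auto simp: fun_eq_iff split: nat.splits)
qed

lemma sum_idxs_Suc:
  "(\<Sum>idx\<in>idxs (Suc k) n. h idx) = (\<Sum>j<n. \<Sum>f\<in>idxs k n. h (case_nat j f))"
proof -
  have "(\<Sum>idx\<in>idxs (Suc k) n. h idx) = (\<Sum>p\<in>{..<n} \<times> idxs k n. h ((\<lambda>(j, f). case_nat j f) p))"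
    by (rule sum.reindex_bij_betw[OF bij_betw_idxs_Suc, symmetric])
  then show ?thesis by (simp add: sum.cartesian_product split_def)
qed

lemma sum_idxs_prod:
  fixes f :: "nat \<Rightarrow> 'c::comm_semiring_1"
  shows "(\<Sum>idx\<in>idxs k n. \<Prod>j<k. f (idx j)) = (\<Sum>i<n. f i) ^ k"
proof -
  have "(\<Prod>j\<in>{..<k}. \<Sum>i\<in>{..<n}. f i) = (\<Sum>g\<in>PiE {..<k} (\<lambda>_. {..<n}). \<Prod>j\<in>{..<k}. f (g j))"
    by (rule prod_sum_PiE) auto
  then show ?thesis by (simp add: idxs_def)
qed

lemma posM_space: "space (posM k) = PiE {..k} (\<lambda>_. {0<..})"
  by (simp add: posM_def space_PiM)

lemma posM_space_pos: "s \<in> space (posM k) \<Longrightarrow> j \<le> k \<Longrightarrow> 0 < s j"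
  by (auto simp: posM_space)

lemma measurable_posM_component: "j \<le> k \<Longrightarrow> (\<lambda>s. s j) \<in> borel_measurable (posM k)"
proof -
  assume "j \<le> k"
  then have "(\<lambda>s. s j) \<in> measurable (posM k) (restrict_space lborel {0<..})"
    unfolding posM_def by (intro measurable_component_singleton) auto
  moreover have "(\<lambda>x::real. x) \<in> measurable (restrict_space lborel {0<..}) borel"
    by (intro measurable_restrict_space1) simp
  ultimately show ?thesis by (rule measurable_comp[unfolded o_def])
qed

lemma borel_measurable_bounded_linear_comp:
  assumes "F \<in> borel_measurable M'" "bounded_linear L"
  shows "(\<lambda>s. L (F s)) \<in> borel_measurable M'"
proof -
  have "L \<in> borel_measurable borel"
    by (intro borel_measurable_continuous_onI linear_continuous_on assms(2))
  then show ?thesis using measurable_comp[OF assms(1)] by (simp add: o_def)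
qed

lemma nn_integral_exp_neg:
  fixes c :: real assumes "0 < c"
  shows "(\<integral>\<^sup>+t. ennreal (exp (- c * t)) \<partial>restrict_space lborel {0<..}) = ennreal (1/c)"
proof -
  have "(\<integral>\<^sup>+t. ennreal (exp (- c * t)) \<partial>restrict_space lborel {0<..})
      = (\<integral>\<^sup>+t. ennreal (exp (- c * t)) * indicator {0<..} t \<partial>lborel)"
    by (rule nn_integral_restrict_space) simp
  also have "\<dots> = (\<integral>\<^sup>+t. ennreal (exp (- c * t)) * indicator {0..} t \<partial>lborel)"
  proof (rule nn_integral_cong_AE)
    show "AE x in lborel. ennreal (exp (- c * x)) * indicator {0<..} x
        = ennreal (exp (- c * x)) * indicator {0..} x"
      using AE_lborel_singleton[of "0::real"] by eventually_elim (auto simp: indicator_def)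
  qed
  also have "\<dots> = ennreal (exp (- c * 0) / c)"
    by (rule nn_integral_has_integral_lebesgue'[OF _ has_integral_exp_minus_to_infinity[OF assms]])
      simp
  finally show ?thesis by simp
qed

lemma nn_integral_posM_prod_exp:
  fixes c A :: real assumes c: "0 < c" and A: "0 \<le> A"
  shows "(\<integral>\<^sup>+s. (\<Prod>j\<in>{..k}. ennreal (A * exp (- c * s j))) \<partial>posM k) = ennreal ((A / c) ^ Suc k)"
proof -
  interpret P: product_sigma_finite "\<lambda>_::nat. restrict_space lborel ({0<..} :: real set)"
    by (rule product_sigma_finite.intro, rule sigma_finite_measure_restrict_space[OF sigma_finite_lborel])
      simp
  have meas: "(\<lambda>t. ennreal (A * exp (- c * t))) \<in> borel_measurable (restrict_space lborel {0<..})"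
    by (rule measurable_restrict_space1) simp
  have "(\<integral>\<^sup>+s. (\<Prod>j\<in>{..k}. ennreal (A * exp (- c * s j))) \<partial>posM k)
     = (\<Prod>j\<in>{..k}. (\<integral>\<^sup>+t. ennreal (A * exp (- c * t)) \<partial>restrict_space lborel {0<..}))"
    unfolding posM_def by (rule P.product_nn_integral_prod) (use meas in auto)
  also have "(\<integral>\<^sup>+t. ennreal (A * exp (- c * t)) \<partial>restrict_space lborel {0<..})
      = ennreal A * (\<integral>\<^sup>+t. ennreal (exp (- c * t)) \<partial>restrict_space lborel {0<..})"
    using A by (subst nn_integral_cmult[symmetric]) (auto simp: ennreal_mult intro: measurable_restrict_space1)
  also have "\<dots> = ennreal (A / c)"
    using nn_integral_exp_neg[OF c] A c by (simp add: ennreal_mult[symmetric] divide_inverse)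
  also have "(\<Prod>j\<in>{..k}. ennreal (A / c)) = ennreal (A / c) ^ Suc k" by simp
  also have "\<dots> = ennreal ((A / c) ^ Suc k)" using A c by (intro ennreal_power) simp
  finally show ?thesis .
qed

section \<open>Chains of semigroup and coupling operators\<close>

locale bilinear_system =
  fixes T :: "real \<Rightarrow> 'x::{banach, second_countable_topology} \<Rightarrow> 'x"
    and N :: "nat \<Rightarrow> 'x \<Rightarrow> 'x" and n :: nat and M \<nu> :: real
  assumes T_bounded_linear: "t \<ge> 0 \<Longrightarrow> bounded_linear (T t)"
    and T_add: "s \<ge> 0 \<Longrightarrow> t \<ge> 0 \<Longrightarrow> T (s + t) = T s \<circ> T t"
    and T_strong: "((\<lambda>t. T t x) \<longlongrightarrow> x) (at_right 0)"
    and M_ge_1: "M \<ge> 1" and nu_pos: "\<nu> > 0"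
    and onorm_T_le: "t \<ge> 0 \<Longrightarrow> onorm (T t) \<le> M * exp (- \<nu> * t)"
    and N_bounded_linear: "i < n \<Longrightarrow> bounded_linear (N i)"
begin

lemma norm_T_le: "t \<ge> 0 \<Longrightarrow> norm (T t x) \<le> M * exp (- \<nu> * t) * norm x"
proof -
  assume t: "t \<ge> 0"
  have "norm (T t x) \<le> onorm (T t) * norm x" by (rule onorm[OF T_bounded_linear[OF t]])
  also have "\<dots> \<le> M * exp (- \<nu> * t) * norm x" using onorm_T_le[OF t] by (rule mult_right_mono) simp
  finally show ?thesis .
qed

lemma norm_T_le_M: "t \<ge> 0 \<Longrightarrow> norm (T t x) \<le> M * norm x"
proof -
  assume t: "t \<ge> 0"
  have "M * exp (- \<nu> * t) * norm x \<le> M * 1 * norm x"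
    using t nu_pos M_ge_1 by (intro mult_right_mono mult_left_mono) auto
  then show ?thesis using norm_T_le[OF t, of x] by simp
qed

lemma orbit_uniformly_continuous:
  assumes "0 < e"
  obtains \<delta> where "\<delta> > 0"
    "\<And>a b. 0 \<le> a \<Longrightarrow> 0 \<le> b \<Longrightarrow> \<bar>a - b\<bar> < \<delta> \<Longrightarrow> norm (T a y - T b y) \<le> e"
proof -
  have "0 < e / M" using assms M_ge_1 by simp
  with T_strong have "eventually (\<lambda>t. dist (T t y) y < e / M) (at_right 0)" by (rule tendstoD)
  then obtain \<delta> where \<delta>: "\<delta> > 0" "\<And>h. 0 < h \<Longrightarrow> h < \<delta> \<Longrightarrow> dist (T h y) y < e / M"
    unfolding eventually_at_right_field by auto
  have one: "norm (T b y - T a y) \<le> e" if ab: "0 \<le> a" "a \<le> b" "b - a < \<delta>" for a b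
  proof (cases "a = b")
    case False
    have "T b y - T a y = T a (T (b - a) y) - T a y" using T_add[of a "b - a"] ab by simp
    also have "\<dots> = T a (T (b - a) y - y)"
      using linear_diff[OF bounded_linear.linear[OF T_bounded_linear[OF ab(1)]]] by simp
    finally have "norm (T b y - T a y) \<le> M * norm (T (b - a) y - y)" using norm_T_le_M[OF ab(1)] by simp
    also have "\<dots> \<le> M * (e / M)"
      using \<delta>(2)[of "b - a"] ab False M_ge_1 by (intro mult_left_mono) (auto simp: dist_norm)
    finally show ?thesis using M_ge_1 by simp
  qed (use assms in simp)
  show ?thesis
  proof (rule that[OF \<delta>(1)])
    fix a b :: real assume "0 \<le> a" "0 \<le> b" "\<bar>a - b\<bar> < \<delta>"
    then show "norm (T a y - T b y) \<le> e"
      using one[of a b] one[of b a] by (cases "a \<le> b") (auto simp: norm_minus_commute)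
  qed
qed

lemma continuous_on_semigroup: "continuous_on UNIV (\<lambda>p. T (max (fst p) 0) (snd p))"
proof (intro continuous_at_imp_continuous_on ballI)
  fix p :: "real \<times> 'x"
  obtain t0 y0 where p: "p = (t0, y0)" by fastforce
  let ?Phi = "\<lambda>p. T (max (fst p) 0) (snd p)"
  show "isCont ?Phi p" unfolding continuous_at_eps_delta
  proof (intro allI impI)
    fix e :: real assume e: "0 < e"
    obtain \<delta>1 where d1: "\<delta>1 > 0"
      "\<And>a b. 0 \<le> a \<Longrightarrow> 0 \<le> b \<Longrightarrow> \<bar>a - b\<bar> < \<delta>1 \<Longrightarrow> norm (T a y0 - T b y0) \<le> e/2"
      using orbit_uniformly_continuous[of "e/2" y0] e by auto
    define \<delta> where "\<delta> = min \<delta>1 (e / (2*M))"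
    have "dist (?Phi q) (?Phi p) < e" if q: "dist q p < \<delta>" for q
    proof -
      obtain t y where qq: "q = (t, y)" by fastforce
      let ?a = "max t 0" and ?b = "max t0 0"
      have "dist t t0 < \<delta>1" "dist y y0 < e / (2*M)"
        using dist_fst_le[of q p] dist_snd_le[of q p] q by (auto simp: \<delta>_def p qq)
      then have tt: "\<bar>?a - ?b\<bar> < \<delta>1" and yy: "norm (y - y0) < e / (2*M)"
        by (auto simp: dist_real_def dist_norm)
      have "?Phi q - ?Phi p = T ?a (y - y0) + (T ?a y0 - T ?b y0)"
        using linear_diff[OF bounded_linear.linear[OF T_bounded_linear[of ?a]]] by (simp add: p qq)
      then have "norm (?Phi q - ?Phi p) \<le> norm (T ?a (y - y0)) + norm (T ?a y0 - T ?b y0)"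
        by (metis norm_triangle_ineq)
      also have "\<dots> \<le> M * norm (y - y0) + e/2"
        using norm_T_le_M[of ?a "y - y0"] d1(2)[of ?a ?b] tt by (intro add_mono) auto
      also have "M * norm (y - y0) < M * (e / (2*M))"
        using yy M_ge_1 by (intro mult_strict_left_mono) auto
      then have "M * norm (y - y0) + e/2 < e" using M_ge_1 by simp
      finally show ?thesis by (simp add: dist_norm)
    qed
    moreover have "\<delta> > 0" using d1 e M_ge_1 by (simp add: \<delta>_def)
    ultimately show "\<exists>\<delta>>0. \<forall>x'. dist x' p < \<delta> \<longrightarrow> dist (?Phi x') (?Phi p) < e" by blast
  qed
qed

lemma measurable_T_apply:
  assumes F: "F \<in> borel_measurable (posM k)" and j: "j \<le> k"
  shows "(\<lambda>s. T (s j) (F s)) \<in> borel_measurable (posM k)"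
proof -
  let ?Phi = "\<lambda>p. T (max (fst p) 0) (snd p)"
  have "?Phi \<in> borel_measurable (borel \<Otimes>\<^sub>M borel)"
    unfolding borel_prod by (rule borel_measurable_continuous_onI[OF continuous_on_semigroup])
  moreover have "(\<lambda>s. (s j, F s)) \<in> measurable (posM k) (borel \<Otimes>\<^sub>M borel)"
    using measurable_posM_component[OF j] F by (intro measurable_Pair) auto
  ultimately have "(\<lambda>s. ?Phi (s j, F s)) \<in> borel_measurable (posM k)"
    by (rule measurable_comp[rotated, unfolded o_def])
  moreover have "?Phi (s j, F s) = T (s j) (F s)" if "s \<in> space (posM k)" for s
    using posM_space_pos[OF that j] by simp
  ultimately show ?thesis
    using measurable_cong[of "posM k" "\<lambda>s. ?Phi (s j, F s)" "\<lambda>s. T (s j) (F s)" borel] by blast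
qed

definition chain_bound :: "nat \<Rightarrow> (nat \<Rightarrow> real) \<Rightarrow> (nat \<Rightarrow> nat) \<Rightarrow> real" where
  "chain_bound k s idx = (\<Prod>j\<le>k. M * exp (- \<nu> * s j)) * (\<Prod>j<k. onorm (N (idx j)))"

definition kappa :: real where "kappa = M^2 / (2 * \<nu>)"

text \<open>By \<open>onorm_power2_le_onorm_comp_adj\<close> this is at most the \<open>\<Gamma>\<^sup>2 = \<Sum>\<^sub>i \<parallel>N\<^sub>i N\<^sub>i\<^sup>*\<parallel>\<close> of the
  smallness condition.\<close>
definition Gamma2 :: real where "Gamma2 = (\<Sum>i<n. onorm (N i) ^ 2)"

lemma kappa_pos: "0 < kappa" using M_ge_1 nu_pos by (simp add: kappa_def)

lemma Gamma2_nonneg: "0 \<le> Gamma2" by (simp add: Gamma2_def sum_nonneg)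

lemma chain_bound_nonneg: "(\<And>j. j < k \<Longrightarrow> idx j < n) \<Longrightarrow> 0 \<le> chain_bound k s idx"
  unfolding chain_bound_def using M_ge_1
  by (intro mult_nonneg_nonneg prod_nonneg onorm_pos_le N_bounded_linear) auto

lemma chain_bound_Suc:
  "chain_bound (Suc k) s idx = chain_bound k s idx * onorm (N (idx k)) * (M * exp (- \<nu> * s (Suc k)))"
  by (simp add: chain_bound_def atMost_Suc lessThan_Suc algebra_simps)

lemma measurable_reach_chain:
  "k \<le> K \<Longrightarrow> (\<And>j. j < k \<Longrightarrow> idx j < n) \<Longrightarrow>
    (\<lambda>s. reach_chain T N k s idx x) \<in> borel_measurable (posM K)"
proof (induction k)
  case 0
  then show ?case using measurable_T_apply[of "\<lambda>_. x" K 0] by simp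
next
  case (Suc k)
  have "(\<lambda>s. reach_chain T N k s idx x) \<in> borel_measurable (posM K)"
    using Suc by simp
  moreover have "bounded_linear (N (idx k))" using Suc.prems by (intro N_bounded_linear) simp
  ultimately have "(\<lambda>s. N (idx k) (reach_chain T N k s idx x)) \<in> borel_measurable (posM K)"
    by (rule borel_measurable_bounded_linear_comp)
  from measurable_T_apply[OF this, of "Suc k"] Suc.prems show ?case by simp
qed

lemma measurable_obs_chain:
  "k \<le> K \<Longrightarrow> (\<And>j. j < k \<Longrightarrow> idx j < n) \<Longrightarrow> F \<in> borel_measurable (posM K) \<Longrightarrow>
    (\<lambda>s. obs_chain T N k s idx (F s)) \<in> borel_measurable (posM K)"
proof (induction k arbitrary: F)
  case 0
  then show ?case using measurable_T_apply[of F K 0] by simp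
next
  case (Suc k)
  have "(\<lambda>s. T (s (Suc k)) (F s)) \<in> borel_measurable (posM K)"
    using Suc.prems by (intro measurable_T_apply) auto
  moreover have "bounded_linear (N (idx k))" using Suc.prems by (intro N_bounded_linear) simp
  ultimately have "(\<lambda>s. N (idx k) (T (s (Suc k)) (F s))) \<in> borel_measurable (posM K)"
    by (rule borel_measurable_bounded_linear_comp)
  then have "(\<lambda>s. obs_chain T N k s idx (N (idx k) (T (s (Suc k)) (F s)))) \<in> borel_measurable (posM K)"
    using Suc.prems by (intro Suc.IH) auto
  then show ?case by simp
qed

lemma bounded_linear_reach_chain:
  "(\<And>j. j \<le> k \<Longrightarrow> 0 \<le> s j) \<Longrightarrow> (\<And>j. j < k \<Longrightarrow> idx j < n) \<Longrightarrow>
    bounded_linear (reach_chain T N k s idx)"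
proof (induction k)
  case 0
  then show ?case using T_bounded_linear by simp
next
  case (Suc k)
  have R: "bounded_linear (reach_chain T N k s idx)" using Suc by simp
  have Nk: "bounded_linear (N (idx k))" using Suc.prems by (intro N_bounded_linear) simp
  have Tk: "bounded_linear (T (s (Suc k)))" using Suc.prems by (intro T_bounded_linear) simp
  have "bounded_linear (\<lambda>x. T (s (Suc k)) (N (idx k) (reach_chain T N k s idx x)))"
    by (rule bounded_linear_compose[OF Tk bounded_linear_compose[OF Nk R]])
  then show ?case by (simp add: o_def)
qed

lemma bounded_linear_obs_chain:
  "(\<And>j. j \<le> k \<Longrightarrow> 0 \<le> s j) \<Longrightarrow> (\<And>j. j < k \<Longrightarrow> idx j < n) \<Longrightarrow>
    bounded_linear (obs_chain T N k s idx)"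
proof (induction k)
  case 0
  then show ?case using T_bounded_linear by simp
next
  case (Suc k)
  have R: "bounded_linear (obs_chain T N k s idx)" using Suc by simp
  have Nk: "bounded_linear (N (idx k))" using Suc.prems by (intro N_bounded_linear) simp
  have Tk: "bounded_linear (T (s (Suc k)))" using Suc.prems by (intro T_bounded_linear) simp
  have "bounded_linear (\<lambda>x. obs_chain T N k s idx (N (idx k) (T (s (Suc k)) x)))"
    by (rule bounded_linear_compose[OF R bounded_linear_compose[OF Nk Tk]])
  then show ?case by (simp add: o_def)
qed

lemma norm_reach_chain_le:
  "(\<And>j. j \<le> k \<Longrightarrow> 0 \<le> s j) \<Longrightarrow> (\<And>j. j < k \<Longrightarrow> idx j < n) \<Longrightarrow>
    norm (reach_chain T N k s idx x) \<le> chain_bound k s idx * norm x"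
proof (induction k)
  case 0
  then show ?case using norm_T_le by (simp add: chain_bound_def)
next
  case (Suc k)
  have "norm (reach_chain T N (Suc k) s idx x) = norm (T (s (Suc k)) (N (idx k) (reach_chain T N k s idx x)))"
    by simp
  also have "\<dots> \<le> M * exp (- \<nu> * s (Suc k)) * norm (N (idx k) (reach_chain T N k s idx x))"
    using Suc.prems by (intro norm_T_le) simp
  also have "\<dots> \<le> M * exp (- \<nu> * s (Suc k)) * (onorm (N (idx k)) * norm (reach_chain T N k s idx x))"
    using Suc.prems M_ge_1 by (intro mult_left_mono onorm N_bounded_linear) auto
  also have "\<dots> \<le> M * exp (- \<nu> * s (Suc k)) * (onorm (N (idx k)) * (chain_bound k s idx * norm x))"
    using Suc M_ge_1 onorm_pos_le[OF N_bounded_linear, of "idx k"] by (intro mult_left_mono) auto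
  finally show ?case by (simp add: chain_bound_Suc algebra_simps)
qed

lemma norm_obs_chain_le:
  "(\<And>j. j \<le> k \<Longrightarrow> 0 \<le> s j) \<Longrightarrow> (\<And>j. j < k \<Longrightarrow> idx j < n) \<Longrightarrow>
    norm (obs_chain T N k s idx x) \<le> chain_bound k s idx * norm x"
proof (induction k arbitrary: x)
  case 0
  then show ?case using norm_T_le by (simp add: chain_bound_def)
next
  case (Suc k)
  have B: "0 \<le> chain_bound k s idx" using Suc.prems by (intro chain_bound_nonneg) auto
  have "norm (obs_chain T N (Suc k) s idx x) \<le> chain_bound k s idx * norm (N (idx k) (T (s (Suc k)) x))"
    using Suc by simp
  also have "\<dots> \<le> chain_bound k s idx * (onorm (N (idx k)) * norm (T (s (Suc k)) x))"
    using Suc.prems B by (intro mult_left_mono onorm N_bounded_linear) auto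
  also have "\<dots> \<le> chain_bound k s idx * (onorm (N (idx k)) * (M * exp (- \<nu> * s (Suc k)) * norm x))"
    using Suc.prems B onorm_pos_le[OF N_bounded_linear, of "idx k"]
    by (intro mult_left_mono norm_T_le) auto
  finally show ?case by (simp add: chain_bound_Suc algebra_simps)
qed

lemma borel_measurable_chain_bound: "(\<lambda>s. chain_bound k s idx) \<in> borel_measurable (posM k)"
proof -
  have "(\<lambda>s. M * exp (- \<nu> * s j)) \<in> borel_measurable (posM k)" if "j \<in> {..k}" for j
    using that by (intro measurable_compose[OF measurable_posM_component]) simp_all
  then have "(\<lambda>s. \<Prod>j\<le>k. M * exp (- \<nu> * s j)) \<in> borel_measurable (posM k)"
    by (rule borel_measurable_prod)
  then show ?thesis unfolding chain_bound_def by (rule borel_measurable_times) simp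
qed

lemma nn_integral_chain_bound_sq:
  "(\<integral>\<^sup>+s. ennreal ((chain_bound k s idx)\<^sup>2) \<partial>posM k)
     = ennreal (kappa ^ Suc k * (\<Prod>j<k. onorm (N (idx j)) ^ 2))"
proof -
  let ?Q = "\<Prod>j<k. onorm (N (idx j)) ^ 2"
  have sq: "(chain_bound k s idx)\<^sup>2 = (\<Prod>j\<le>k. M^2 * exp (- (2*\<nu>) * s j)) * ?Q" for s
  proof -
    have "(chain_bound k s idx)\<^sup>2 = (\<Prod>j\<le>k. (M * exp (- \<nu> * s j))^2) * ?Q"
      by (simp only: chain_bound_def power_mult_distrib prod_power_distrib)
    also have "(\<Prod>j\<le>k. (M * exp (- \<nu> * s j))^2) = (\<Prod>j\<le>k. M^2 * exp (- (2*\<nu>) * s j))"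
    proof (intro prod.cong refl)
      fix j
      have "(exp (- \<nu> * s j))^2 = exp (- (2*\<nu>) * s j)"
        by (simp add: power2_eq_square exp_add[symmetric])
      then show "(M * exp (- \<nu> * s j))^2 = M^2 * exp (- (2*\<nu>) * s j)" by (simp add: power_mult_distrib)
    qed
    finally show ?thesis .
  qed
  have meas: "(\<lambda>s. \<Prod>j\<in>{..k}. ennreal (M^2 * exp (- (2*\<nu>) * s j))) \<in> borel_measurable (posM k)"
    by (intro borel_measurable_prod_ennreal measurable_compose[OF measurable_posM_component]) auto
  have "ennreal ((chain_bound k s idx)\<^sup>2) = (\<Prod>j\<in>{..k}. ennreal (M^2 * exp (- (2*\<nu>) * s j))) * ennreal ?Q"
    for s
  proof -
    have "ennreal ((chain_bound k s idx)\<^sup>2) = ennreal (\<Prod>j\<le>k. M^2 * exp (- (2*\<nu>) * s j)) * ennreal ?Q"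
      unfolding sq by (rule ennreal_mult) (auto intro: prod_nonneg)
    also have "ennreal (\<Prod>j\<le>k. M^2 * exp (- (2*\<nu>) * s j)) = (\<Prod>j\<in>{..k}. ennreal (M^2 * exp (- (2*\<nu>) * s j)))"
      by (rule prod_ennreal[symmetric]) simp
    finally show ?thesis .
  qed
  then have "(\<integral>\<^sup>+s. ennreal ((chain_bound k s idx)\<^sup>2) \<partial>posM k)
      = (\<integral>\<^sup>+s. (\<Prod>j\<in>{..k}. ennreal (M^2 * exp (- (2*\<nu>) * s j))) * ennreal ?Q \<partial>posM k)"
    by simp
  also have "\<dots> = (\<integral>\<^sup>+s. (\<Prod>j\<in>{..k}. ennreal (M^2 * exp (- (2*\<nu>) * s j))) \<partial>posM k) * ennreal ?Q"
    by (rule nn_integral_multc[OF meas])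
  also have "\<dots> = ennreal (kappa ^ Suc k) * ennreal ?Q"
    using nn_integral_posM_prod_exp[of "2*\<nu>" "M^2" k] nu_pos by (simp add: kappa_def)
  finally show ?thesis using kappa_pos by (simp add: ennreal_mult prod_nonneg)
qed

lemma sum_nn_integral_chain_bound_sq:
  "(\<Sum>idx\<in>idxs k n. \<integral>\<^sup>+s. ennreal ((chain_bound k s idx)\<^sup>2) \<partial>posM k) = ennreal (kappa * (kappa * Gamma2) ^ k)"
proof -
  have "(\<Sum>idx\<in>idxs k n. \<integral>\<^sup>+s. ennreal ((chain_bound k s idx)\<^sup>2) \<partial>posM k)
      = ennreal (\<Sum>idx\<in>idxs k n. kappa ^ Suc k * (\<Prod>j<k. onorm (N (idx j)) ^ 2))"
    using kappa_pos by (simp add: nn_integral_chain_bound_sq sum_ennreal prod_nonneg)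
  also have "(\<Sum>idx\<in>idxs k n. kappa ^ Suc k * (\<Prod>j<k. onorm (N (idx j)) ^ 2)) = kappa ^ Suc k * Gamma2 ^ k"
    using sum_idxs_prod[of "\<lambda>i. onorm (N i) ^ 2" k n] by (simp add: sum_distrib_left[symmetric] Gamma2_def)
  finally show ?thesis by (simp add: power_mult_distrib mult.assoc)
qed

lemma chain_energy_le:
  assumes c: "0 \<le> c"
    and le: "\<And>idx s. idx \<in> idxs k n \<Longrightarrow> s \<in> space (posM k) \<Longrightarrow> norm (z idx s) \<le> chain_bound k s idx * c"
  shows "(\<Sum>idx\<in>idxs k n. \<integral>\<^sup>+s. ennreal ((norm (z idx s))\<^sup>2) \<partial>posM k) \<le> ennreal (kappa * (kappa * Gamma2) ^ k * c^2)"
proof -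
  have "(\<Sum>idx\<in>idxs k n. \<integral>\<^sup>+s. ennreal ((norm (z idx s))\<^sup>2) \<partial>posM k)
      \<le> (\<Sum>idx\<in>idxs k n. \<integral>\<^sup>+s. ennreal (c^2) * ennreal ((chain_bound k s idx)\<^sup>2) \<partial>posM k)"
  proof (intro sum_mono nn_integral_mono)
    fix idx s assume "idx \<in> idxs k n" "s \<in> space (posM k)"
    then have "(norm (z idx s))\<^sup>2 \<le> (chain_bound k s idx * c)\<^sup>2" by (intro power_mono le) auto
    then show "ennreal ((norm (z idx s))\<^sup>2) \<le> ennreal (c^2) * ennreal ((chain_bound k s idx)\<^sup>2)"
      by (simp add: ennreal_mult[symmetric] power_mult_distrib mult.commute)
  qed
  also have "\<dots> = ennreal (c^2) * ennreal (kappa * (kappa * Gamma2) ^ k)"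
  proof -
    have "(\<lambda>s. ennreal ((chain_bound k s idx)\<^sup>2)) \<in> borel_measurable (posM k)" for idx
      by (rule measurable_compose[OF borel_measurable_chain_bound]) simp
    then show ?thesis
      by (simp add: nn_integral_cmult sum_distrib_left[symmetric] sum_nn_integral_chain_bound_sq)
  qed
  finally show ?thesis using kappa_pos Gamma2_nonneg by (simp add: ennreal_mult[symmetric] mult.commute)
qed

end

locale stable_bilinear_system = bilinear_system T N n M \<nu>
  for T :: "real \<Rightarrow> 'x::{real_inner, banach, second_countable_topology} \<Rightarrow> 'x"
    and N n M \<nu> +
  assumes small: "M\<^sup>2 * (sqrt (\<Sum>i<n. onorm (N i \<circ> adj (N i))))\<^sup>2 / (2 * \<nu>) < 1"
begin

lemma kappa_Gamma2_less_1: "kappa * Gamma2 < 1"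
proof -
  have "Gamma2 \<le> (\<Sum>i<n. onorm (N i \<circ> adj (N i)))"
    unfolding Gamma2_def by (intro sum_mono onorm_power2_le_onorm_comp_adj N_bounded_linear) auto
  moreover from this have "0 \<le> (\<Sum>i<n. onorm (N i \<circ> adj (N i)))" using Gamma2_nonneg by linarith
  ultimately have "kappa * Gamma2 \<le> kappa * (\<Sum>i<n. onorm (N i \<circ> adj (N i)))"
    using kappa_pos by (intro mult_left_mono) auto
  also have "\<dots> < 1" using small \<open>0 \<le> (\<Sum>i<n. onorm (N i \<circ> adj (N i)))\<close> by (simp add: kappa_def)
  finally show ?thesis .
qed

definition gain :: real where "gain = kappa / (1 - kappa * Gamma2)"

lemma gain_pos: "0 < gain" using kappa_pos kappa_Gamma2_less_1 by (simp add: gain_def)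

lemma suminf_chain_energy: "0 \<le> X \<Longrightarrow> (\<Sum>k. ennreal (kappa * (kappa * Gamma2) ^ k * X)) = ennreal (gain * X)"
proof -
  assume X: "0 \<le> X"
  have "norm (kappa * Gamma2) < 1" using kappa_Gamma2_less_1 kappa_pos Gamma2_nonneg by simp
  then have "(\<lambda>k. kappa * (kappa * Gamma2) ^ k * X) sums (kappa * (1 / (1 - kappa * Gamma2)) * X)"
    by (intro sums_mult sums_mult2 geometric_sums)
  then have s: "(\<lambda>k. kappa * (kappa * Gamma2) ^ k * X) sums (gain * X)" by (simp add: gain_def)
  then show ?thesis
    using kappa_pos Gamma2_nonneg X by (subst suminf_ennreal2) (auto simp: sums_iff)
qed

end

section \<open>Integration over the Fock space\<close>

definition fock_eq :: "nat \<Rightarrow> (nat \<Rightarrow> nat) \<Rightarrow> 'k fock \<Rightarrow> 'k fock \<Rightarrow> bool" where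
  "fock_eq n d f g \<longleftrightarrow> (\<forall>k. \<forall>idx\<in>idxs (d k) n. \<forall>s\<in>space (posM k). f k s idx = g k s idx)"

lemma fock_norm2_cong: "fock_eq n d f g \<Longrightarrow> fock_norm2 n d f = fock_norm2 n d g"
  unfolding fock_norm2_def fock_eq_def
  by (intro arg_cong[where f = suminf] ext sum.cong refl nn_integral_cong) auto

lemma fock_norm_cong: "fock_eq n d f g \<Longrightarrow> fock_norm n d f = fock_norm n d g"
  by (simp add: fock_norm_def fock_norm2_cong)

lemma fock_spaceD:
  assumes "f \<in> fock_space n d" "idx \<in> idxs (d k) n"
  shows "(\<lambda>s. f k s idx) \<in> borel_measurable (posM k)" and "fock_norm2 n d f < \<infinity>"
  using assms by (auto simp: fock_space_def)

lemma fock_norm_nonneg: "0 \<le> fock_norm n d f"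
  by (simp add: fock_norm_def)

lemma fock_norm_power2: "fock_norm n d f ^ 2 = enn2real (fock_norm2 n d f)"
  by (simp add: fock_norm_def)

lemma borel_measurable_ennreal_norm_power2:
  "g \<in> borel_measurable M \<Longrightarrow> (\<lambda>s. ennreal ((norm (g s))\<^sup>2)) \<in> borel_measurable M"
  by measurable

definition fock_level :: "nat \<Rightarrow> (nat \<Rightarrow> nat) \<Rightarrow> 'k::real_normed_vector fock \<Rightarrow> nat \<Rightarrow> ennreal" where
  "fock_level n d f k = (\<Sum>idx\<in>idxs (d k) n. \<integral>\<^sup>+ s. ennreal ((norm (f k s idx))\<^sup>2) \<partial>posM k)"

definition fock_level_real :: "nat \<Rightarrow> (nat \<Rightarrow> nat) \<Rightarrow> 'k::real_normed_vector fock \<Rightarrow> nat \<Rightarrow> real" where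
  "fock_level_real n d f k = enn2real (fock_level n d f k)"

lemma fock_norm2_eq_suminf_level: "fock_norm2 n d f = (\<Sum>k. fock_level n d f k)"
  by (simp add: fock_norm2_def fock_level_def)

lemma nn_integral_le_fock_level:
  "idx \<in> idxs (d k) n \<Longrightarrow> (\<integral>\<^sup>+ s. ennreal ((norm (f k s idx))\<^sup>2) \<partial>posM k) \<le> fock_level n d f k"
  unfolding fock_level_def by (rule member_le_sum) auto

lemma fock_level_finite: "f \<in> fock_space n d \<Longrightarrow> fock_level n d f k < \<infinity>"
  using sum_le_suminf[of "fock_level n d f" "{k}"] fock_spaceD(2)[of f n d]
  unfolding fock_norm2_eq_suminf_level fock_space_def by (auto simp: order_le_less_trans)

lemma fock_level_eq_real: "f \<in> fock_space n d \<Longrightarrow> fock_level n d f k = ennreal (fock_level_real n d f k)"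
  using fock_level_finite[of f n d k] by (simp add: fock_level_real_def less_top[symmetric])

lemma fock_level_real_nonneg: "0 \<le> fock_level_real n d f k"
  by (simp add: fock_level_real_def)

lemma summable_fock_level_real: "f \<in> fock_space n d \<Longrightarrow> summable (fock_level_real n d f)"
proof -
  assume f: "f \<in> fock_space n d"
  have "(\<Sum>k. ennreal (fock_level_real n d f k)) = fock_norm2 n d f"
    by (simp add: fock_norm2_eq_suminf_level fock_level_eq_real[OF f])
  also have "\<dots> \<noteq> top" using f by (auto simp: fock_space_def)
  finally show ?thesis by (intro summable_suminf_not_top fock_level_real_nonneg)
qed

lemma fock_norm_power2_eq_suminf:
  "f \<in> fock_space n d \<Longrightarrow> fock_norm n d f ^ 2 = (\<Sum>k. fock_level_real n d f k)"
  using summable_fock_level_real[of f n d]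
  by (simp add: fock_norm_def fock_norm2_eq_suminf_level fock_level_eq_real suminf_ennreal2
      fock_level_real_nonneg suminf_nonneg)

lemma fock_norm2_le_scaled:
  fixes f :: "'a::real_normed_vector fock" and g :: "'b::real_normed_vector fock"
  assumes g: "g \<in> fock_space n d"
    and le: "\<And>k idx s. idx \<in> idxs (d k) n \<Longrightarrow> s \<in> space (posM k) \<Longrightarrow> norm (f k s idx) \<le> c * norm (g k s idx)"
  shows "fock_norm2 n d f \<le> ennreal (c^2) * fock_norm2 n d g"
proof -
  have "fock_level n d f k \<le> ennreal (c^2) * fock_level n d g k" for k
  proof -
    have "fock_level n d f k
        \<le> (\<Sum>idx\<in>idxs (d k) n. \<integral>\<^sup>+ s. ennreal (c^2) * ennreal ((norm (g k s idx))\<^sup>2) \<partial>posM k)"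
      unfolding fock_level_def
    proof (intro sum_mono nn_integral_mono)
      fix idx s assume idx: "idx \<in> idxs (d k) n" and s: "s \<in> space (posM k)"
      have "0 \<le> c * norm (g k s idx)" using le[OF idx s] norm_ge_zero order_trans by blast
      then have "(norm (f k s idx))\<^sup>2 \<le> (c * norm (g k s idx))\<^sup>2" using le[OF idx s] by (intro power_mono) auto
      then show "ennreal ((norm (f k s idx))\<^sup>2) \<le> ennreal (c^2) * ennreal ((norm (g k s idx))\<^sup>2)"
        by (simp add: ennreal_mult[symmetric] power_mult_distrib)
    qed
    also have "\<dots> = ennreal (c^2) * fock_level n d g k"
      unfolding fock_level_def sum_distrib_left
      by (intro sum.cong refl nn_integral_cmult borel_measurable_ennreal_norm_power2 fock_spaceD(1)[OF g])
    finally show ?thesis .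
  qed
  then have "(\<Sum>k. fock_level n d f k) \<le> (\<Sum>k. ennreal (c^2) * fock_level n d g k)" by (intro suminf_le) auto
  then show ?thesis by (simp add: fock_norm2_eq_suminf_level)
qed

lemma fock_space_dominated:
  fixes f :: "'a::real_normed_vector fock" and g :: "'b::real_normed_vector fock"
  assumes g: "g \<in> fock_space n d"
    and le: "\<And>k idx s. idx \<in> idxs (d k) n \<Longrightarrow> s \<in> space (posM k) \<Longrightarrow> norm (f k s idx) \<le> c * norm (g k s idx)"
    and meas: "\<And>k idx. idx \<in> idxs (d k) n \<Longrightarrow> (\<lambda>s. f k s idx) \<in> borel_measurable (posM k)"
  shows "f \<in> fock_space n d"
proof -
  have "fock_norm2 n d f \<le> ennreal (c^2) * fock_norm2 n d g" by (rule fock_norm2_le_scaled[OF g le])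
  also have "\<dots> < \<infinity>" using g by (simp add: fock_space_def ennreal_mult_less_top)
  finally show ?thesis using meas by (simp add: fock_space_def)
qed

text \<open>Here \<open>h\<close> stands for a pointwise product of \<open>f\<close> and \<open>g\<close> (a scalar, scalar-vector or
  inner product); \<open>2 \<parallel>f\<parallel> \<parallel>g\<parallel> \<le> \<parallel>f\<parallel>\<^sup>2 + \<parallel>g\<parallel>\<^sup>2\<close> makes it integrable level by level.\<close>
locale fock_product =
  fixes f :: "'a::real_normed_vector fock" and g :: "'b::real_normed_vector fock"
    and h :: "'c::{banach,second_countable_topology} fock" and n d
  assumes f: "f \<in> fock_space n d" and g: "g \<in> fock_space n d"
    and h_measurable: "\<And>k idx. idx \<in> idxs (d k) n \<Longrightarrow> (\<lambda>s. h k s idx) \<in> borel_measurable (posM k)"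
    and h_le: "\<And>k idx s. idx \<in> idxs (d k) n \<Longrightarrow> s \<in> space (posM k) \<Longrightarrow>
      norm (h k s idx) \<le> norm (f k s idx) * norm (g k s idx)"
begin

lemma nn_integral_norm_le:
  assumes idx: "idx \<in> idxs (d k) n"
  shows "(\<integral>\<^sup>+s. ennreal (norm (h k s idx)) \<partial>posM k) \<le>
    (\<integral>\<^sup>+s. ennreal ((norm (f k s idx))\<^sup>2) \<partial>posM k) + (\<integral>\<^sup>+s. ennreal ((norm (g k s idx))\<^sup>2) \<partial>posM k)"
proof -
  have "(\<integral>\<^sup>+s. ennreal (norm (h k s idx)) \<partial>posM k) \<le>
      (\<integral>\<^sup>+s. ennreal ((norm (f k s idx))\<^sup>2) + ennreal ((norm (g k s idx))\<^sup>2) \<partial>posM k)"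
  proof (rule nn_integral_mono)
    fix s assume s: "s \<in> space (posM k)"
    have "2 * norm (f k s idx) * norm (g k s idx) \<le> (norm (f k s idx))\<^sup>2 + (norm (g k s idx))\<^sup>2"
      by (rule sum_squares_bound)
    then have "norm (h k s idx) \<le> (norm (f k s idx))\<^sup>2 + (norm (g k s idx))\<^sup>2"
      using h_le[OF idx s] mult_nonneg_nonneg[OF norm_ge_zero[of "f k s idx"] norm_ge_zero[of "g k s idx"]]
      by linarith
    then show "ennreal (norm (h k s idx)) \<le> ennreal ((norm (f k s idx))\<^sup>2) + ennreal ((norm (g k s idx))\<^sup>2)"
      by (simp add: ennreal_plus[symmetric] del: ennreal_plus)
  qed
  also have "\<dots> = (\<integral>\<^sup>+s. ennreal ((norm (f k s idx))\<^sup>2) \<partial>posM k) + (\<integral>\<^sup>+s. ennreal ((norm (g k s idx))\<^sup>2) \<partial>posM k)"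
    by (intro nn_integral_add borel_measurable_ennreal_norm_power2 fock_spaceD(1)[OF f idx]
        fock_spaceD(1)[OF g idx])
  finally show ?thesis .
qed

lemma integrable: "idx \<in> idxs (d k) n \<Longrightarrow> integrable (posM k) (\<lambda>s. h k s idx)"
proof (rule integrableI_bounded)
  assume idx: "idx \<in> idxs (d k) n"
  show "(\<lambda>s. h k s idx) \<in> borel_measurable (posM k)" by (rule h_measurable[OF idx])
  have "(\<integral>\<^sup>+s. ennreal ((norm (f k s idx))\<^sup>2) \<partial>posM k) < \<infinity>"
    "(\<integral>\<^sup>+s. ennreal ((norm (g k s idx))\<^sup>2) \<partial>posM k) < \<infinity>"
    using nn_integral_le_fock_level[of idx d k n f] nn_integral_le_fock_level[of idx d k n g] idx
      fock_level_finite[OF f] fock_level_finite[OF g]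
    by (blast intro: order_le_less_trans)+
  then show "(\<integral>\<^sup>+s. ennreal (norm (h k s idx)) \<partial>posM k) < \<infinity>"
    using nn_integral_norm_le[OF idx] by (simp add: order_le_less_trans)
qed

lemma norm_level_le:
  "norm (\<Sum>idx\<in>idxs (d k) n. \<integral>s. h k s idx \<partial>posM k) \<le> fock_level_real n d f k + fock_level_real n d g k"
proof -
  have "ennreal (norm (\<Sum>idx\<in>idxs (d k) n. \<integral>s. h k s idx \<partial>posM k))
      \<le> (\<Sum>idx\<in>idxs (d k) n. ennreal (norm (\<integral>s. h k s idx \<partial>posM k)))"
    by (simp add: sum_ennreal norm_sum ennreal_leI)
  also have "\<dots> \<le> (\<Sum>idx\<in>idxs (d k) n. (\<integral>\<^sup>+s. ennreal ((norm (f k s idx))\<^sup>2) \<partial>posM k)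
      + (\<integral>\<^sup>+s. ennreal ((norm (g k s idx))\<^sup>2) \<partial>posM k))"
    by (intro sum_mono order_trans[OF integral_norm_bound_ennreal[OF integrable]
        nn_integral_norm_le])
  also have "\<dots> = ennreal (fock_level_real n d f k + fock_level_real n d g k)"
    by (simp add: sum.distrib fock_level_def[symmetric] fock_level_eq_real[OF f]
        fock_level_eq_real[OF g] fock_level_real_nonneg)
  finally show ?thesis
    using fock_level_real_nonneg[of n d f k] fock_level_real_nonneg[of n d g k]
    by (metis ennreal_le_iff add_nonneg_nonneg)
qed

lemma summable: "summable (\<lambda>k. \<Sum>idx\<in>idxs (d k) n. \<integral>s. h k s idx \<partial>posM k)"
proof (rule summable_norm_cancel, rule summable_comparison_test)
  show "\<exists>N. \<forall>k\<ge>N. norm (norm (\<Sum>idx\<in>idxs (d k) n. \<integral>s. h k s idx \<partial>posM k))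
      \<le> fock_level_real n d f k + fock_level_real n d g k"
    using norm_level_le by simp
  show "summable (\<lambda>k. fock_level_real n d f k + fock_level_real n d g k)"
    by (intro summable_add summable_fock_level_real f g)
qed

end

definition fock_integral :: "nat \<Rightarrow> (nat \<Rightarrow> nat) \<Rightarrow> real fock \<Rightarrow> real" where
  "fock_integral n d h = (\<Sum>k. \<Sum>idx\<in>idxs (d k) n. \<integral>s. h k s idx \<partial>posM k)"

definition fock_integrable :: "nat \<Rightarrow> (nat \<Rightarrow> nat) \<Rightarrow> real fock \<Rightarrow> bool" where
  "fock_integrable n d h \<longleftrightarrow> (\<forall>k. \<forall>idx\<in>idxs (d k) n. integrable (posM k) (\<lambda>s. h k s idx))
      \<and> summable (\<lambda>k. \<Sum>idx\<in>idxs (d k) n. \<integral>s. h k s idx \<partial>posM k)"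

lemma fock_inner_eq_integral: "fock_inner n d f g = fock_integral n d (\<lambda>k s idx. f k s idx * g k s idx)"
  by (simp add: fock_inner_def fock_integral_def)

lemma fock_inner_commute: "fock_inner n d f g = fock_inner n d g f"
  by (simp add: fock_inner_def inner_commute)

lemma fock_integrable_mult:
  fixes f g :: "real fock"
  assumes f: "f \<in> fock_space n d" and g: "g \<in> fock_space n d"
  shows "fock_integrable n d (\<lambda>k s idx. f k s idx * g k s idx)"
proof -
  have "(\<lambda>s. f k s idx * g k s idx) \<in> borel_measurable (posM k)" if "idx \<in> idxs (d k) n" for k idx
    using fock_spaceD(1)[OF f that] fock_spaceD(1)[OF g that] by (rule borel_measurable_times)
  then interpret fock_product f g "\<lambda>k s idx. f k s idx * g k s idx" n d
    using f g by unfold_locales (simp_all add: abs_mult)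
  show ?thesis unfolding fock_integrable_def using integrable summable by blast
qed

lemma fock_integrable_add:
  assumes "fock_integrable n d h1" "fock_integrable n d h2"
  shows "fock_integrable n d (\<lambda>k s idx. h1 k s idx + h2 k s idx)"
    and "fock_integral n d (\<lambda>k s idx. h1 k s idx + h2 k s idx) = fock_integral n d h1 + fock_integral n d h2"
proof -
  have eq: "(\<Sum>idx\<in>idxs (d k) n. \<integral>s. h1 k s idx + h2 k s idx \<partial>posM k)
     = (\<Sum>idx\<in>idxs (d k) n. \<integral>s. h1 k s idx \<partial>posM k) + (\<Sum>idx\<in>idxs (d k) n. \<integral>s. h2 k s idx \<partial>posM k)" for k
    using assms unfolding fock_integrable_def by (simp add: sum.distrib)
  show "fock_integrable n d (\<lambda>k s idx. h1 k s idx + h2 k s idx)"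
    using assms unfolding fock_integrable_def eq by (auto intro: summable_add)
  show "fock_integral n d (\<lambda>k s idx. h1 k s idx + h2 k s idx) = fock_integral n d h1 + fock_integral n d h2"
    using assms unfolding fock_integral_def eq fock_integrable_def by (subst suminf_add) auto
qed

lemma fock_integrable_cmult:
  assumes "fock_integrable n d h"
  shows "fock_integrable n d (\<lambda>k s idx. c * h k s idx)"
    and "fock_integral n d (\<lambda>k s idx. c * h k s idx) = c * fock_integral n d h"
proof -
  have eq: "(\<Sum>idx\<in>idxs (d k) n. \<integral>s. c * h k s idx \<partial>posM k)
     = c * (\<Sum>idx\<in>idxs (d k) n. \<integral>s. h k s idx \<partial>posM k)" for k
    using assms unfolding fock_integrable_def by (simp add: sum_distrib_left)
  show "fock_integrable n d (\<lambda>k s idx. c * h k s idx)"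
    using assms unfolding fock_integrable_def eq by (auto intro: summable_mult)
  show "fock_integral n d (\<lambda>k s idx. c * h k s idx) = c * fock_integral n d h"
    using assms unfolding fock_integral_def eq fock_integrable_def by (simp add: suminf_mult)
qed

lemma fock_integrable_sum:
  assumes "finite F" "\<And>e. e \<in> F \<Longrightarrow> fock_integrable n d (H e)"
  shows "fock_integrable n d (\<lambda>k s idx. \<Sum>e\<in>F. H e k s idx)
    \<and> fock_integral n d (\<lambda>k s idx. \<Sum>e\<in>F. H e k s idx) = (\<Sum>e\<in>F. fock_integral n d (H e))"
  using assms
proof (induction F rule: finite_induct)
  case empty
  then show ?case by (simp add: fock_integrable_def fock_integral_def)
next
  case (insert e F)
  then show ?case using fock_integrable_add[of n d "H e" "\<lambda>k s idx. \<Sum>e\<in>F. H e k s idx"] by simp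
qed

lemma fock_integral_nonneg:
  "fock_integrable n d h \<Longrightarrow> (\<And>k s idx. 0 \<le> h k s idx) \<Longrightarrow> 0 \<le> fock_integral n d h"
  unfolding fock_integrable_def fock_integral_def
  by (intro suminf_nonneg sum_nonneg Bochner_Integration.integral_nonneg) auto

lemma fock_inner_self:
  fixes f :: "real fock"
  assumes f: "f \<in> fock_space n d"
  shows "fock_inner n d f f = fock_norm n d f ^ 2"
proof -
  have ok: "fock_integrable n d (\<lambda>k s idx. f k s idx * f k s idx)" by (rule fock_integrable_mult[OF f f])
  have "fock_level_real n d f k = (\<Sum>idx\<in>idxs (d k) n. \<integral>s. f k s idx * f k s idx \<partial>posM k)" for k
  proof -
    have "fock_level n d f k = (\<Sum>idx\<in>idxs (d k) n. ennreal (\<integral>s. f k s idx * f k s idx \<partial>posM k))"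
      unfolding fock_level_def power2_eq_square real_norm_def abs_mult_self_eq
      using ok by (intro sum.cong refl nn_integral_eq_integral) (auto simp: fock_integrable_def)
    also have "\<dots> = ennreal (\<Sum>idx\<in>idxs (d k) n. \<integral>s. f k s idx * f k s idx \<partial>posM k)"
      by (intro sum_ennreal) auto
    finally show ?thesis unfolding fock_level_real_def by (simp add: sum_nonneg)
  qed
  then show ?thesis by (simp add: fock_norm_power2_eq_suminf[OF f] fock_inner_eq_integral fock_integral_def)
qed

lemma fock_integral_mult_sum:
  assumes F: "finite F" "F \<subseteq> fock_space n d" and b: "b \<in> fock_space n d"
  shows "fock_integrable n d (\<lambda>k s idx. b k s idx * (\<Sum>e\<in>F. c e * e k s idx))"
    and "fock_integral n d (\<lambda>k s idx. b k s idx * (\<Sum>e\<in>F. c e * e k s idx))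
      = (\<Sum>e\<in>F. c e * fock_inner n d b e)"
proof -
  have eq: "(\<lambda>k s idx. b k s idx * (\<Sum>e\<in>F. c e * e k s idx))
      = (\<lambda>k s idx. \<Sum>e\<in>F. c e * (b k s idx * e k s idx))"
    by (simp add: sum_distrib_left mult.left_commute)
  have "fock_integrable n d (\<lambda>k s idx. c e * (b k s idx * e k s idx))"
    and "fock_integral n d (\<lambda>k s idx. c e * (b k s idx * e k s idx)) = c e * fock_inner n d b e"
    if "e \<in> F" for e
    using fock_integrable_cmult[OF fock_integrable_mult[OF b, of e]] F that
    by (auto simp: fock_inner_eq_integral)
  then show "fock_integrable n d (\<lambda>k s idx. b k s idx * (\<Sum>e\<in>F. c e * e k s idx))"
    and "fock_integral n d (\<lambda>k s idx. b k s idx * (\<Sum>e\<in>F. c e * e k s idx))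
      = (\<Sum>e\<in>F. c e * fock_inner n d b e)"
    unfolding eq using fock_integrable_sum[OF F(1)] by simp_all
qed

text \<open>Expand \<open>0 \<le> \<parallel>a - \<Sum>\<^sub>e \<langle>e, a\<rangle> e\<parallel>\<^sup>2\<close>; the Fock space is not a type here, so the expansion
  is carried out pointwise under \<open>fock_integral\<close>.\<close>
lemma fock_bessel_inequality:
  fixes a :: "real fock"
  assumes F: "finite F" "F \<subseteq> fock_space n d" and a: "a \<in> fock_space n d"
    and one: "\<And>e. e \<in> F \<Longrightarrow> fock_inner n d e e = 1"
    and orth: "\<And>e e'. e \<in> F \<Longrightarrow> e' \<in> F \<Longrightarrow> e \<noteq> e' \<Longrightarrow> fock_inner n d e e' = 0"
  shows "(\<Sum>e\<in>F. (fock_inner n d e a)\<^sup>2) \<le> fock_norm n d a ^ 2"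
proof -
  define c where "c e = fock_inner n d e a" for e
  define S where "S k s idx = (\<Sum>e\<in>F. c e * e k s idx)" for k s idx
  have eS: "fock_integrable n d (\<lambda>k s idx. e k s idx * S k s idx)"
    "fock_integral n d (\<lambda>k s idx. e k s idx * S k s idx) = c e" if e: "e \<in> F" for e
  proof -
    show "fock_integrable n d (\<lambda>k s idx. e k s idx * S k s idx)"
      unfolding S_def using F e by (intro fock_integral_mult_sum) auto
    have "(\<Sum>e'\<in>F. c e' * fock_inner n d e e') = (\<Sum>e'\<in>{e}. c e' * fock_inner n d e e')"
      using F e orth[OF e] by (intro sum.mono_neutral_right) auto
    then show "fock_integral n d (\<lambda>k s idx. e k s idx * S k s idx) = c e"
      unfolding S_def using F e one[OF e] by (subst fock_integral_mult_sum) auto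
  qed
  have aS: "fock_integrable n d (\<lambda>k s idx. a k s idx * S k s idx)"
    "fock_integral n d (\<lambda>k s idx. a k s idx * S k s idx) = (\<Sum>e\<in>F. (c e)\<^sup>2)"
    unfolding S_def using fock_integral_mult_sum[OF F a]
    by (simp_all add: c_def fock_inner_commute power2_eq_square)
  have "(\<lambda>k s idx. S k s idx * S k s idx) = (\<lambda>k s idx. \<Sum>e\<in>F. c e * (e k s idx * S k s idx))"
    by (simp add: S_def sum_distrib_right mult.assoc)
  then have SS: "fock_integrable n d (\<lambda>k s idx. S k s idx * S k s idx)"
    "fock_integral n d (\<lambda>k s idx. S k s idx * S k s idx) = (\<Sum>e\<in>F. (c e)\<^sup>2)"
    using fock_integrable_sum[OF F(1), of n d "\<lambda>e k s idx. c e * (e k s idx * S k s idx)"]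
      fock_integrable_cmult[OF eS(1)] eS(2)
    by (simp_all add: power2_eq_square)
  define r where "r k s idx = (a k s idx * a k s idx + (-2) * (a k s idx * S k s idx))
    + S k s idx * S k s idx" for k s idx
  have "fock_integrable n d r" "fock_integral n d r = fock_norm n d a ^ 2 - (\<Sum>e\<in>F. (c e)\<^sup>2)"
    using fock_integrable_add[OF fock_integrable_add(1)[OF fock_integrable_mult[OF a a]
          fock_integrable_cmult(1)[OF aS(1), of "-2"]] SS(1)]
      fock_integrable_add(2)[OF fock_integrable_mult[OF a a] fock_integrable_cmult(1)[OF aS(1), of "-2"]]
      fock_integrable_cmult(2)[OF aS(1), of "-2"] aS(2) SS(2) fock_inner_self[OF a]
    unfolding r_def by (simp_all add: fock_inner_eq_integral)
  moreover have "r k s idx = (a k s idx - S k s idx)\<^sup>2" for k s idx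
    by (simp add: r_def power2_eq_square algebra_simps)
  ultimately have "0 \<le> fock_norm n d a ^ 2 - (\<Sum>e\<in>F. (c e)\<^sup>2)"
    by (metis fock_integral_nonneg zero_le_power2)
  then show ?thesis by (simp add: c_def)
qed

lemma nuclear_norm_le_suminf:
  assumes "\<And>i. a i \<in> fock_space n d1" "\<And>i. b i \<in> fock_space n d2"
    and "\<And>z. z \<in> fock_space n d1 \<Longrightarrow> (\<lambda>m. fock_norm n d2
      (\<lambda>k s idx. L z k s idx - (\<Sum>i<m. fock_inner n d1 z (a i) *\<^sub>R b i k s idx))) \<longlonglongrightarrow> 0"
  shows "nuclear_norm n d1 d2 L \<le> (\<Sum>i. ennreal (fock_norm n d1 (a i) * fock_norm n d2 (b i)))"
  unfolding nuclear_norm_def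
  by (rule Inf_lower, unfold mem_Collect_eq, intro exI[of _ a] exI[of _ b] conjI refl allI ballI assms)

text \<open>Written \<open>R\<^sub>g f\<close> below; the reachability map has this form (\<open>reachR_eq_fock_pairing\<close>).\<close>
definition fock_pairing :: "nat \<Rightarrow> real fock \<Rightarrow> 'x::{banach,second_countable_topology} fock \<Rightarrow> 'x" where
  "fock_pairing n f g = (\<Sum>k. \<integral>s. (\<Sum>idx\<in>idxs (Suc k) n. f k s idx *\<^sub>R g k s idx) \<partial>posM k)"

lemma fock_product_scaleR:
  fixes f :: "real fock" and g :: "'x::{banach,second_countable_topology} fock"
  assumes f: "f \<in> fock_space n d" and g: "g \<in> fock_space n d"
  shows "fock_product f g (\<lambda>k s idx. f k s idx *\<^sub>R g k s idx) n d"
proof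
  show "(\<lambda>s. f k s idx *\<^sub>R g k s idx) \<in> borel_measurable (posM k)" if "idx \<in> idxs (d k) n" for k idx
    using fock_spaceD(1)[OF f that] fock_spaceD(1)[OF g that] by (rule borel_measurable_scaleR)
qed (simp_all add: f g)

lemma fock_pairing_level_eq:
  fixes g :: "'x::{banach,second_countable_topology} fock"
  assumes f: "f \<in> fock_space n Suc" and g: "g \<in> fock_space n Suc"
  shows "(\<integral>s. (\<Sum>idx\<in>idxs (Suc k) n. f k s idx *\<^sub>R g k s idx) \<partial>posM k)
    = (\<Sum>idx\<in>idxs (Suc k) n. \<integral>s. f k s idx *\<^sub>R g k s idx \<partial>posM k)"
proof -
  interpret fock_product f g "\<lambda>k s idx. f k s idx *\<^sub>R g k s idx" n Suc
    by (rule fock_product_scaleR[OF f g])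
  show ?thesis by (rule Bochner_Integration.integral_sum) (rule integrable)
qed

lemma fock_pairing_diff:
  fixes g1 g2 g3 :: "'x::{banach,second_countable_topology} fock"
  assumes f: "f \<in> fock_space n Suc" and g1: "g1 \<in> fock_space n Suc" and g2: "g2 \<in> fock_space n Suc"
    and g3: "\<And>k idx s. idx \<in> idxs (Suc k) n \<Longrightarrow> s \<in> space (posM k) \<Longrightarrow> g3 k s idx = g1 k s idx - g2 k s idx"
  shows "fock_pairing n f g1 - fock_pairing n f g2 = fock_pairing n f g3"
proof -
  interpret P1: fock_product f g1 "\<lambda>k s idx. f k s idx *\<^sub>R g1 k s idx" n Suc
    by (rule fock_product_scaleR[OF f g1])
  interpret P2: fock_product f g2 "\<lambda>k s idx. f k s idx *\<^sub>R g2 k s idx" n Suc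
    by (rule fock_product_scaleR[OF f g2])
  have "(\<integral>s. (\<Sum>idx\<in>idxs (Suc k) n. f k s idx *\<^sub>R g1 k s idx) \<partial>posM k)
      - (\<integral>s. (\<Sum>idx\<in>idxs (Suc k) n. f k s idx *\<^sub>R g2 k s idx) \<partial>posM k)
      = (\<integral>s. (\<Sum>idx\<in>idxs (Suc k) n. f k s idx *\<^sub>R g3 k s idx) \<partial>posM k)" for k
  proof -
    have "(\<integral>s. (\<Sum>idx\<in>idxs (Suc k) n. f k s idx *\<^sub>R g1 k s idx) \<partial>posM k)
        - (\<integral>s. (\<Sum>idx\<in>idxs (Suc k) n. f k s idx *\<^sub>R g2 k s idx) \<partial>posM k)
      = (\<integral>s. (\<Sum>idx\<in>idxs (Suc k) n. f k s idx *\<^sub>R g1 k s idx)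
          - (\<Sum>idx\<in>idxs (Suc k) n. f k s idx *\<^sub>R g2 k s idx) \<partial>posM k)"
      by (intro Bochner_Integration.integral_diff[symmetric] Bochner_Integration.integrable_sum
          P1.integrable P2.integrable)
    also have "\<dots> = (\<integral>s. (\<Sum>idx\<in>idxs (Suc k) n. f k s idx *\<^sub>R g3 k s idx) \<partial>posM k)"
      by (intro Bochner_Integration.integral_cong refl)
        (simp add: g3 sum_subtractf[symmetric] scaleR_diff_right)
    finally show ?thesis .
  qed
  moreover have "summable (\<lambda>k. \<integral>s. (\<Sum>idx\<in>idxs (Suc k) n. f k s idx *\<^sub>R g1 k s idx) \<partial>posM k)"
    "summable (\<lambda>k. \<integral>s. (\<Sum>idx\<in>idxs (Suc k) n. f k s idx *\<^sub>R g2 k s idx) \<partial>posM k)"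
    using P1.summable P2.summable by (simp_all only: fock_pairing_level_eq[OF f g1] fock_pairing_level_eq[OF f g2])
  ultimately show ?thesis unfolding fock_pairing_def by (subst suminf_diff) auto
qed

definition fock_coord :: "'a::real_inner fock \<Rightarrow> 'a \<Rightarrow> real fock" where
  "fock_coord g u = (\<lambda>k s idx. inner (g k s idx) u)"

lemma fock_coord_space:
  fixes g :: "'a::{real_inner,second_countable_topology} fock"
  assumes g: "g \<in> fock_space n d"
  shows "fock_coord g u \<in> fock_space n d"
proof (rule fock_space_dominated[OF g, of _ "norm u"])
  show "norm (fock_coord g u k s idx) \<le> norm u * norm (g k s idx)" for k idx s
    using Cauchy_Schwarz_ineq2[of "g k s idx" u] by (simp add: fock_coord_def mult.commute)
  show "(\<lambda>s. fock_coord g u k s idx) \<in> borel_measurable (posM k)" if "idx \<in> idxs (d k) n" for k idx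
    unfolding fock_coord_def using fock_spaceD(1)[OF g that] by (intro borel_measurable_inner) auto
qed

lemma inner_fock_pairing:
  fixes g :: "'x::{real_inner,banach,second_countable_topology} fock"
  assumes f: "f \<in> fock_space n Suc" and g: "g \<in> fock_space n Suc"
  shows "inner (fock_pairing n f g) u = fock_inner n Suc f (fock_coord g u)"
proof -
  interpret fock_product f g "\<lambda>k s idx. f k s idx *\<^sub>R g k s idx" n Suc
    by (rule fock_product_scaleR[OF f g])
  have "inner (fock_pairing n f g) u = (\<Sum>k. inner (\<Sum>idx\<in>idxs (Suc k) n. \<integral>s. f k s idx *\<^sub>R g k s idx \<partial>posM k) u)"
    unfolding fock_pairing_def fock_pairing_level_eq[OF f g]
    by (rule bounded_linear.suminf[OF bounded_linear_inner_left summable])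
  also have "\<dots> = fock_inner n Suc f (fock_coord g u)"
    unfolding fock_inner_def fock_coord_def inner_sum_left
    by (intro arg_cong[where f = suminf] ext sum.cong refl)
      (simp add: integral_inner_left[OF integrable, symmetric])
  finally show ?thesis .
qed

text \<open>Bessel's inequality in \<open>X\<close>, applied pointwise and integrated.\<close>
lemma sum_fock_norm_coord_le:
  fixes g :: "'a::{real_inner,banach,second_countable_topology} fock"
  assumes g: "g \<in> fock_space n d" and u: "orthonormal_upto u M"
  shows "(\<Sum>m<M. fock_norm n d (fock_coord g (u m)) ^ 2) \<le> enn2real (fock_norm2 n d g)"
proof -
  have "(\<Sum>m<M. fock_norm2 n d (fock_coord g (u m))) = (\<Sum>k. \<Sum>m<M. fock_level n d (fock_coord g (u m)) k)"
    unfolding fock_norm2_eq_suminf_level by (rule suminf_sum[symmetric]) auto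
  also have "\<dots> \<le> (\<Sum>k. fock_level n d g k)"
  proof (intro suminf_le allI)
    fix k
    have "(\<Sum>m<M. fock_level n d (fock_coord g (u m)) k)
        = (\<Sum>idx\<in>idxs (d k) n. \<integral>\<^sup>+ s. (\<Sum>m<M. ennreal ((norm (inner (g k s idx) (u m)))\<^sup>2)) \<partial>posM k)"
      unfolding fock_level_def fock_coord_def
      by (subst sum.swap) (intro sum.cong refl nn_integral_sum[symmetric]
          borel_measurable_ennreal_norm_power2 borel_measurable_inner fock_spaceD(1)[OF g]
          measurable_const, auto)
    also have "\<dots> \<le> fock_level n d g k"
      unfolding fock_level_def
    proof (intro sum_mono nn_integral_mono)
      fix idx s
      have "(\<Sum>m<M. (inner (g k s idx) (u m))\<^sup>2) \<le> (norm (g k s idx))\<^sup>2"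
        using orthonormal_upto_pythagoras[OF u, of "g k s idx"] by simp
      then show "(\<Sum>m<M. ennreal ((norm (inner (g k s idx) (u m)))\<^sup>2)) \<le> ennreal ((norm (g k s idx))\<^sup>2)"
        by (simp add: sum_ennreal)
    qed
    finally show "(\<Sum>m<M. fock_level n d (fock_coord g (u m)) k) \<le> fock_level n d g k" .
  qed auto
  finally have le: "(\<Sum>m<M. fock_norm2 n d (fock_coord g (u m))) \<le> fock_norm2 n d g"
    by (simp add: fock_norm2_eq_suminf_level)
  have fin: "fock_norm2 n d (fock_coord g (u m)) < top" for m
    using fock_coord_space[OF g] by (auto simp: fock_space_def)
  have "(\<Sum>m<M. fock_norm n d (fock_coord g (u m)) ^ 2) = enn2real (\<Sum>m<M. fock_norm2 n d (fock_coord g (u m)))"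
    unfolding fock_norm_power2 by (rule enn2real_sum[symmetric, simplified o_def]) (rule fin)
  also have "\<dots> \<le> enn2real (fock_norm2 n d g)"
    using le g by (intro enn2real_mono) (auto simp: fock_space_def)
  finally show ?thesis .
qed

text \<open>Expand \<open>\<parallel>R\<^sub>g e\<parallel>\<^sup>2\<close> by Parseval in \<open>X\<close> and apply Bessel's inequality in the Fock space
  to the coordinates \<open>\<langle>g, u\<^sub>m\<rangle>\<close>.\<close>
lemma sum_norm_fock_pairing_le:
  fixes g :: "'x::{real_inner,banach,second_countable_topology} fock"
  assumes g: "g \<in> fock_space n Suc" and F: "finite F" "F \<subseteq> fock_space n Suc"
    and one: "\<And>e. e \<in> F \<Longrightarrow> fock_inner n Suc e e = 1"
    and orth: "\<And>e e'. e \<in> F \<Longrightarrow> e' \<in> F \<Longrightarrow> e \<noteq> e' \<Longrightarrow> fock_inner n Suc e e' = 0"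
  shows "(\<Sum>e\<in>F. norm (fock_pairing n e g) ^ 2) \<le> enn2real (fock_norm2 n Suc g)"
proof -
  obtain u :: "nat \<Rightarrow> 'x" where u: "\<And>M. orthonormal_upto u M"
    and expansion: "\<And>x. (\<lambda>M. \<Sum>j<M. inner x (u j) *\<^sub>R u j) \<longlonglongrightarrow> x"
    using orthonormal_expansion_exists by blast
  note parseval = orthonormal_upto_parseval[OF u expansion]
  define a where "a m = fock_coord g (u m)" for m
  have a: "a m \<in> fock_space n Suc" for m unfolding a_def by (rule fock_coord_space[OF g])
  have coord: "inner (fock_pairing n e g) (u m) = fock_inner n Suc e (a m)" if "e \<in> F" for e m
    unfolding a_def using F that by (intro inner_fock_pairing g) auto
  have partial: "(\<Sum>m<M. fock_norm n Suc (a m) ^ 2) \<le> enn2real (fock_norm2 n Suc g)" for M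
    unfolding a_def by (rule sum_fock_norm_coord_le[OF g u])
  have summable_a: "summable (\<lambda>m. fock_norm n Suc (a m) ^ 2)"
  proof (rule bounded_imp_summable)
    show "(\<Sum>k\<le>m. fock_norm n Suc (a k) ^ 2) \<le> enn2real (fock_norm2 n Suc g)" for m
      using partial[of "Suc m"] by (simp add: lessThan_Suc_atMost)
  qed simp
  have sums_e: "(\<lambda>m. (fock_inner n Suc e (a m))^2) sums (norm (fock_pairing n e g) ^ 2)" if "e \<in> F" for e
    using parseval[of "fock_pairing n e g"] coord[OF that] by simp
  have summable_e: "summable (\<lambda>m. (fock_inner n Suc e (a m))^2)" if "e \<in> F" for e
    using sums_e[OF that] by (simp add: sums_iff)
  have "(\<Sum>e\<in>F. norm (fock_pairing n e g) ^ 2) = (\<Sum>e\<in>F. \<Sum>m. (fock_inner n Suc e (a m))^2)"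
    using sums_e by (intro sum.cong refl) (simp add: sums_iff)
  also have "\<dots> = (\<Sum>m. \<Sum>e\<in>F. (fock_inner n Suc e (a m))^2)"
    by (rule suminf_sum[symmetric]) (rule summable_e)
  also have "\<dots> \<le> (\<Sum>m. fock_norm n Suc (a m) ^ 2)"
    by (intro suminf_le fock_bessel_inequality[OF F a one orth] summable_a summable_sum summable_e)
  also have "\<dots> \<le> enn2real (fock_norm2 n Suc g)" by (intro suminf_le_const summable_a partial)
  finally show ?thesis .
qed

section \<open>Reachability kernels, observability and Hankel operators\<close>

context stable_bilinear_system
begin

definition reach_kernel :: "(nat \<Rightarrow> 'x) \<Rightarrow> 'x fock" where
  "reach_kernel \<phi> = (\<lambda>k s idx. reach_chain T N k s (\<lambda>i. idx (Suc i)) (\<phi> (idx 0)))"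

lemma reachR_eq_fock_pairing: "reachR n T N \<psi> P f = fock_pairing n f (reach_kernel (\<lambda>j. P (\<psi> j)))"
  by (simp add: reachR_def fock_pairing_def reach_kernel_def)

lemma fock_level_reach_kernel_le:
  "fock_level n Suc (reach_kernel \<phi>) k \<le> ennreal (kappa * (kappa * Gamma2) ^ k * (\<Sum>j<n. norm (\<phi> j) ^ 2))"
proof -
  have "fock_level n Suc (reach_kernel \<phi>) k
      = (\<Sum>j<n. \<Sum>idx\<in>idxs k n. \<integral>\<^sup>+s. ennreal ((norm (reach_chain T N k s idx (\<phi> j)))\<^sup>2) \<partial>posM k)"
    unfolding fock_level_def by (subst sum_idxs_Suc) (simp add: reach_kernel_def)
  also have "\<dots> \<le> (\<Sum>j<n. ennreal (kappa * (kappa * Gamma2) ^ k * (norm (\<phi> j))^2))"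
  proof (intro sum_mono chain_energy_le)
    fix j idx s assume "idx \<in> idxs k n" "s \<in> space (posM k)"
    then show "norm (reach_chain T N k s idx (\<phi> j)) \<le> chain_bound k s idx * norm (\<phi> j)"
      by (intro norm_reach_chain_le) (auto simp: idxs_less less_imp_le[OF posM_space_pos])
  qed simp
  also have "\<dots> = ennreal (kappa * (kappa * Gamma2) ^ k * (\<Sum>j<n. norm (\<phi> j) ^ 2))"
    using kappa_pos Gamma2_nonneg by (simp add: sum_ennreal sum_distrib_left)
  finally show ?thesis .
qed

lemma fock_norm2_reach_kernel_le: "fock_norm2 n Suc (reach_kernel \<phi>) \<le> ennreal (gain * (\<Sum>j<n. norm (\<phi> j) ^ 2))"
proof -
  have "fock_norm2 n Suc (reach_kernel \<phi>) \<le> (\<Sum>k. ennreal (kappa * (kappa * Gamma2) ^ k * (\<Sum>j<n. norm (\<phi> j) ^ 2)))"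
    unfolding fock_norm2_eq_suminf_level by (intro suminf_le fock_level_reach_kernel_le) auto
  also have "\<dots> = ennreal (gain * (\<Sum>j<n. norm (\<phi> j) ^ 2))" by (rule suminf_chain_energy) (simp add: sum_nonneg)
  finally show ?thesis .
qed

lemma reach_kernel_space: "reach_kernel \<phi> \<in> fock_space n Suc"
proof -
  have "(\<lambda>s. reach_kernel \<phi> k s idx) \<in> borel_measurable (posM k)" if "idx \<in> idxs (Suc k) n" for k idx
    unfolding reach_kernel_def using that
    by (intro measurable_reach_chain) (auto dest: idxs_Suc_tail simp: idxs_less)
  then show ?thesis
    unfolding fock_space_def using fock_norm2_reach_kernel_le[of \<phi>] by (auto simp: order_le_less_trans)
qed

lemma reach_kernel_diff:
  assumes "s \<in> space (posM k)" "idx \<in> idxs (Suc k) n"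
  shows "reach_kernel (\<lambda>j. \<phi>1 j - \<phi>2 j) k s idx = reach_kernel \<phi>1 k s idx - reach_kernel \<phi>2 k s idx"
proof -
  have "bounded_linear (reach_chain T N k s (\<lambda>i. idx (Suc i)))"
    using assms by (intro bounded_linear_reach_chain)
      (auto simp: idxs_less less_imp_le[OF posM_space_pos] dest: idxs_Suc_tail)
  then show ?thesis by (simp add: reach_kernel_def linear_diff bounded_linear.linear)
qed

end

locale observed_bilinear_system = stable_bilinear_system T N n M \<nu>
  for T :: "real \<Rightarrow> 'x::{real_inner, banach, second_countable_topology} \<Rightarrow> 'x" and N n M \<nu> +
  fixes C :: "'x \<Rightarrow> 'h::{real_inner, banach, second_countable_topology}"
  assumes C_bounded_linear: "bounded_linear C"
begin

definition obs_gain :: real where "obs_gain = gain * (onorm C)^2"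

lemma obs_gain_nonneg: "0 \<le> obs_gain" using gain_pos by (simp add: obs_gain_def)

lemma bounded_linear_C_obs_chain:
  "s \<in> space (posM k) \<Longrightarrow> idx \<in> idxs k n \<Longrightarrow> bounded_linear (\<lambda>x. C (obs_chain T N k s idx x))"
  by (rule bounded_linear_compose[OF C_bounded_linear bounded_linear_obs_chain])
    (auto simp: idxs_less less_imp_le[OF posM_space_pos])

lemma fock_norm2_obsW_le: "fock_norm2 n (\<lambda>k. k) (obsW T N C x) \<le> ennreal (obs_gain * norm x ^ 2)"
proof -
  have "fock_level n (\<lambda>k. k) (obsW T N C x) k \<le> ennreal (kappa * (kappa * Gamma2) ^ k * (norm x * onorm C)^2)" for k
    unfolding fock_level_def obsW_def
  proof (rule chain_energy_le)
    fix idx s assume "idx \<in> idxs k n" "s \<in> space (posM k)"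
    then have "norm (obs_chain T N k s idx x) \<le> chain_bound k s idx * norm x"
      by (intro norm_obs_chain_le) (auto simp: idxs_less less_imp_le[OF posM_space_pos])
    then have "onorm C * norm (obs_chain T N k s idx x) \<le> onorm C * (chain_bound k s idx * norm x)"
      by (rule mult_left_mono) (rule onorm_pos_le[OF C_bounded_linear])
    then show "norm (C (obs_chain T N k s idx x)) \<le> chain_bound k s idx * (norm x * onorm C)"
      using onorm[OF C_bounded_linear, of "obs_chain T N k s idx x"] by (simp add: algebra_simps)
  qed (simp add: onorm_pos_le[OF C_bounded_linear])
  then have "fock_norm2 n (\<lambda>k. k) (obsW T N C x) \<le> (\<Sum>k. ennreal (kappa * (kappa * Gamma2) ^ k * (norm x * onorm C)^2))"
    unfolding fock_norm2_eq_suminf_level by (intro suminf_le) auto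
  also have "\<dots> = ennreal (gain * (norm x * onorm C)^2)" by (rule suminf_chain_energy) simp
  finally show ?thesis by (simp add: obs_gain_def power_mult_distrib algebra_simps)
qed

lemma obsW_space: "obsW T N C x \<in> fock_space n (\<lambda>k. k)"
proof -
  have "(\<lambda>s. obsW T N C x k s idx) \<in> borel_measurable (posM k)" if "idx \<in> idxs k n" for k idx
    unfolding obsW_def using that
    by (intro borel_measurable_bounded_linear_comp[OF measurable_obs_chain C_bounded_linear])
      (auto simp: idxs_less)
  then show ?thesis
    unfolding fock_space_def using fock_norm2_obsW_le[of x] by (auto simp: order_le_less_trans)
qed

lemma fock_norm_obsW_le: "fock_norm n (\<lambda>k. k) (obsW T N C x) \<le> sqrt obs_gain * norm x"
proof -
  have "enn2real (fock_norm2 n (\<lambda>k. k) (obsW T N C x)) \<le> obs_gain * norm x ^ 2"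
    using fock_norm2_obsW_le obs_gain_nonneg by (intro enn2real_leI) auto
  then have "fock_norm n (\<lambda>k. k) (obsW T N C x) \<le> sqrt (obs_gain * norm x ^ 2)"
    by (simp add: fock_norm_def)
  also have "\<dots> = sqrt obs_gain * norm x" by (simp add: real_sqrt_mult)
  finally show ?thesis .
qed

lemma fock_norm_obsW_0: "fock_norm n (\<lambda>k. k) (obsW T N C 0) = 0"
  using fock_norm_obsW_le[of 0] fock_norm_nonneg[of n "\<lambda>k. k" "obsW T N C 0"] by simp

lemma hankel_diff_eq:
  assumes f: "f \<in> fock_space n Suc"
  shows "fock_eq n (\<lambda>k. k)
     (\<lambda>k s idx. obsW T N C (reachR n T N \<psi> P f) k s idx - obsW T N C (reachR n T N \<psi> id f) k s idx)
     (obsW T N C (fock_pairing n f (reach_kernel (\<lambda>j. P (\<psi> j) - \<psi> j))))"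
proof -
  have "reachR n T N \<psi> P f - reachR n T N \<psi> id f = fock_pairing n f (reach_kernel (\<lambda>j. P (\<psi> j) - \<psi> j))"
    unfolding reachR_eq_fock_pairing
    by (rule fock_pairing_diff[OF f reach_kernel_space reach_kernel_space]) (simp add: reach_kernel_diff)
  moreover have "C (obs_chain T N k s idx a) - C (obs_chain T N k s idx b) = C (obs_chain T N k s idx (a - b))"
    if "s \<in> space (posM k)" "idx \<in> idxs k n" for k s idx a b
    using linear_diff[OF bounded_linear.linear[OF bounded_linear_C_obs_chain[OF that]], of a b] by simp
  ultimately show ?thesis by (simp add: fock_eq_def obsW_def)
qed

lemma hs_norm2_obs_pairing_le:
  fixes L :: "real fock \<Rightarrow> 'h fock"
  assumes g: "g \<in> fock_space n Suc"
    and L: "\<And>f. f \<in> fock_space n Suc \<Longrightarrow> fock_eq n (\<lambda>k. k) (L f) (obsW T N C (fock_pairing n f g))"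
  shows "hs_norm2 n Suc (\<lambda>k. k) L \<le> ennreal (obs_gain * enn2real (fock_norm2 n Suc g))"
  unfolding hs_norm2_def
proof (rule SUP_least)
  fix E :: "real fock set" assume "E \<in> {E. fock_orthonormal n Suc E}"
  then have E: "E \<subseteq> fock_space n Suc" and one: "\<And>e. e \<in> E \<Longrightarrow> fock_inner n Suc e e = 1"
    and orth: "\<And>e e'. e \<in> E \<Longrightarrow> e' \<in> E \<Longrightarrow> e \<noteq> e' \<Longrightarrow> fock_inner n Suc e e' = 0"
    by (auto simp: fock_orthonormal_def)
  show "(\<Sum>\<^sub>\<infinity>e\<in>E. ennreal ((fock_norm n (\<lambda>k. k) (L e))\<^sup>2)) \<le> ennreal (obs_gain * enn2real (fock_norm2 n Suc g))"
  proof (rule infsum_le_finite_sums)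
    show "(\<lambda>e. ennreal ((fock_norm n (\<lambda>k. k) (L e))\<^sup>2)) summable_on E"
      by (rule nonneg_summable_on_complete) simp
    fix F assume F: "finite F" "F \<subseteq> E"
    have each: "fock_norm n (\<lambda>k. k) (L e) ^ 2 \<le> obs_gain * norm (fock_pairing n e g) ^ 2" if e: "e \<in> F" for e
    proof -
      have "fock_norm n (\<lambda>k. k) (L e) = fock_norm n (\<lambda>k. k) (obsW T N C (fock_pairing n e g))"
        using e F E by (intro fock_norm_cong L) auto
      also have "\<dots> \<le> sqrt obs_gain * norm (fock_pairing n e g)" by (rule fock_norm_obsW_le)
      finally have "fock_norm n (\<lambda>k. k) (L e) ^ 2 \<le> (sqrt obs_gain * norm (fock_pairing n e g)) ^ 2"
        by (intro power_mono fock_norm_nonneg)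
      then show ?thesis using obs_gain_nonneg by (simp add: power_mult_distrib)
    qed
    have "(\<Sum>e\<in>F. ennreal ((fock_norm n (\<lambda>k. k) (L e))\<^sup>2)) = ennreal (\<Sum>e\<in>F. (fock_norm n (\<lambda>k. k) (L e))\<^sup>2)"
      by (rule sum_ennreal) simp
    also have "\<dots> \<le> ennreal (\<Sum>e\<in>F. obs_gain * norm (fock_pairing n e g) ^ 2)"
      by (intro ennreal_leI sum_mono each)
    also have "(\<Sum>e\<in>F. obs_gain * norm (fock_pairing n e g) ^ 2) = obs_gain * (\<Sum>e\<in>F. norm (fock_pairing n e g) ^ 2)"
      by (simp add: sum_distrib_left)
    also have "\<dots> \<le> obs_gain * enn2real (fock_norm2 n Suc g)"
    proof (intro mult_left_mono sum_norm_fock_pairing_le[OF g F(1)] obs_gain_nonneg)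
      show "F \<subseteq> fock_space n Suc" using F E by blast
      show "\<And>e. e \<in> F \<Longrightarrow> fock_inner n Suc e e = 1" using F one by blast
      show "\<And>e e'. e \<in> F \<Longrightarrow> e' \<in> F \<Longrightarrow> e \<noteq> e' \<Longrightarrow> fock_inner n Suc e e' = 0" using F orth by blast
    qed
    finally show "(\<Sum>e\<in>F. ennreal ((fock_norm n (\<lambda>k. k) (L e))\<^sup>2)) \<le> ennreal (obs_gain * enn2real (fock_norm2 n Suc g))"
      by (simp add: ennreal_leI)
  qed
qed

lemma sum_fock_norm_obsW_le:
  assumes S: "(SUP E\<in>{E. orthonormal_set E}. (\<Sum>\<^sub>\<infinity>e\<in>E. ennreal ((fock_norm n (\<lambda>k. k) (obsW T N C e))\<^sup>2))) \<le> ennreal S"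
    and S0: "0 \<le> S" and u: "\<And>K. orthonormal_upto u K"
  shows "(\<Sum>m<K. fock_norm n (\<lambda>k. k) (obsW T N C (u m)) ^ 2) \<le> S"
proof -
  define I where "I = {m\<in>{..<K}. u m \<noteq> 0}"
  have inner_u: "inner (u i) (u j) = (if i = j \<and> u i \<noteq> 0 then 1 else 0)" for i j
    using u[of "Suc (max i j)"] unfolding orthonormal_upto_def by (meson less_Suc_eq_le max.cobounded1 max.cobounded2)
  have inj: "inj_on u I"
  proof (rule inj_onI)
    fix i j assume "i \<in> I" "j \<in> I" "u i = u j"
    then show "i = j" using inner_u[of i j] inner_u[of i i] by (auto simp: I_def split: if_splits)
  qed
  have ortho: "orthonormal_set (u ` I)"
    unfolding orthonormal_set_def
  proof (intro conjI ballI impI)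
    fix e assume "e \<in> u ` I"
    then obtain i where "i \<in> I" "e = u i" by blast
    then show "norm e = 1" using inner_u[of i i] by (simp add: I_def norm_eq_sqrt_inner)
  next
    fix e e' assume "e \<in> u ` I" "e' \<in> u ` I" "e \<noteq> e'"
    then obtain i j where "e = u i" "e' = u j" "i \<noteq> j" by blast
    then show "inner e e' = 0" using inner_u[of i j] by simp
  qed
  have "(\<Sum>m<K. fock_norm n (\<lambda>k. k) (obsW T N C (u m)) ^ 2) = (\<Sum>m\<in>I. fock_norm n (\<lambda>k. k) (obsW T N C (u m)) ^ 2)"
    by (rule sum.mono_neutral_right) (auto simp: I_def fock_norm_obsW_0)
  also have "\<dots> = (\<Sum>e\<in>u ` I. fock_norm n (\<lambda>k. k) (obsW T N C e) ^ 2)"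
    by (rule sum.reindex[OF inj, symmetric, simplified o_def])
  finally have eq: "(\<Sum>m<K. fock_norm n (\<lambda>k. k) (obsW T N C (u m)) ^ 2) = (\<Sum>e\<in>u ` I. fock_norm n (\<lambda>k. k) (obsW T N C e) ^ 2)" .
  have "ennreal (\<Sum>e\<in>u ` I. fock_norm n (\<lambda>k. k) (obsW T N C e) ^ 2)
      = (\<Sum>\<^sub>\<infinity>e\<in>u ` I. ennreal ((fock_norm n (\<lambda>k. k) (obsW T N C e))\<^sup>2))"
    by (simp add: I_def sum_ennreal)
  also have "\<dots> \<le> (SUP E\<in>{E. orthonormal_set E}. (\<Sum>\<^sub>\<infinity>e\<in>E. ennreal ((fock_norm n (\<lambda>k. k) (obsW T N C e))\<^sup>2)))"
    using ortho by (intro SUP_upper) simp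
  also have "\<dots> \<le> ennreal S" by (rule S)
  finally show ?thesis using eq S0 by simp
qed

lemma obs_pairing_expansion:
  fixes L :: "real fock \<Rightarrow> 'h fock"
  assumes g: "g \<in> fock_space n Suc"
    and L: "\<And>f. f \<in> fock_space n Suc \<Longrightarrow> fock_eq n (\<lambda>k. k) (L f) (obsW T N C (fock_pairing n f g))"
    and u: "\<And>x. (\<lambda>K. \<Sum>j<K. inner x (u j) *\<^sub>R u j) \<longlonglongrightarrow> x"
    and z: "z \<in> fock_space n Suc"
  shows "(\<lambda>K. fock_norm n (\<lambda>k. k) (\<lambda>k s idx. L z k s idx
    - (\<Sum>i<K. fock_inner n Suc z (fock_coord g (u i)) *\<^sub>R obsW T N C (u i) k s idx))) \<longlonglongrightarrow> 0"
proof -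
  define y where "y = fock_pairing n z g"
  define Q where "Q K = (\<Sum>i<K. inner y (u i) *\<^sub>R u i)" for K
  have eq: "fock_norm n (\<lambda>k. k) (\<lambda>k s idx. L z k s idx
      - (\<Sum>i<K. fock_inner n Suc z (fock_coord g (u i)) *\<^sub>R obsW T N C (u i) k s idx))
    = fock_norm n (\<lambda>k. k) (obsW T N C (y - Q K))" for K
  proof (rule fock_norm_cong)
    have Lz: "fock_eq n (\<lambda>k. k) (L z) (obsW T N C y)" unfolding y_def by (rule L[OF z])
    show "fock_eq n (\<lambda>k. k) (\<lambda>k s idx. L z k s idx
      - (\<Sum>i<K. fock_inner n Suc z (fock_coord g (u i)) *\<^sub>R obsW T N C (u i) k s idx)) (obsW T N C (y - Q K))"
      unfolding fock_eq_def
    proof (intro allI ballI)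
      fix k idx s assume idx: "idx \<in> idxs k n" and s: "s \<in> space (posM k)"
      interpret bl: bounded_linear "\<lambda>x. C (obs_chain T N k s idx x)"
        by (rule bounded_linear_C_obs_chain[OF s idx])
      have "L z k s idx = C (obs_chain T N k s idx y)" using Lz idx s by (auto simp: fock_eq_def obsW_def)
      then show "L z k s idx - (\<Sum>i<K. fock_inner n Suc z (fock_coord g (u i)) *\<^sub>R obsW T N C (u i) k s idx)
          = obsW T N C (y - Q K) k s idx"
        by (simp add: Q_def y_def obsW_def bl.diff bl.sum bl.scaleR inner_fock_pairing[OF z g])
    qed
  qed
  have "(\<lambda>K. y - Q K) \<longlonglongrightarrow> y - y" unfolding Q_def by (rule tendsto_diff[OF tendsto_const u])
  then have up: "(\<lambda>K. sqrt obs_gain * norm (y - Q K)) \<longlonglongrightarrow> sqrt obs_gain * 0"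
    by (intro tendsto_mult tendsto_const) (simp add: tendsto_norm_zero_iff)
  show ?thesis unfolding eq
  proof (rule tendsto_sandwich[OF _ _ tendsto_const up[simplified]])
    show "\<forall>\<^sub>F K in sequentially. 0 \<le> fock_norm n (\<lambda>k. k) (obsW T N C (y - Q K))"
      by (simp add: fock_norm_nonneg)
    show "\<forall>\<^sub>F K in sequentially. fock_norm n (\<lambda>k. k) (obsW T N C (y - Q K)) \<le> sqrt obs_gain * norm (y - Q K)"
      by (simp add: fock_norm_obsW_le)
  qed
qed

text \<open>Cauchy--Schwarz for the decomposition of \<open>obs_pairing_expansion\<close>: the coefficient fields
  have square-summable norms by Bessel's inequality, the images \<open>W u\<^sub>i\<close> by the Hilbert--Schmidt
  assumption on \<open>W\<close>.\<close>
lemma nuclear_norm_obs_pairing_le: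
  fixes L :: "real fock \<Rightarrow> 'h fock"
  assumes g: "g \<in> fock_space n Suc"
    and L: "\<And>f. f \<in> fock_space n Suc \<Longrightarrow> fock_eq n (\<lambda>k. k) (L f) (obsW T N C (fock_pairing n f g))"
    and S: "(SUP E\<in>{E. orthonormal_set E}. (\<Sum>\<^sub>\<infinity>e\<in>E. ennreal ((fock_norm n (\<lambda>k. k) (obsW T N C e))\<^sup>2))) \<le> ennreal S"
    and S0: "0 \<le> S"
  shows "nuclear_norm n Suc (\<lambda>k. k) L \<le> ennreal (sqrt (enn2real (fock_norm2 n Suc g)) * sqrt S)"
proof -
  obtain u :: "nat \<Rightarrow> 'x" where u: "\<And>K. orthonormal_upto u K"
    and expansion: "\<And>x. (\<lambda>K. \<Sum>j<K. inner x (u j) *\<^sub>R u j) \<longlonglongrightarrow> x"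
    using orthonormal_expansion_exists by blast
  have "nuclear_norm n Suc (\<lambda>k. k) L \<le> (\<Sum>i. ennreal (fock_norm n Suc (fock_coord g (u i))
      * fock_norm n (\<lambda>k. k) (obsW T N C (u i))))"
    by (intro nuclear_norm_le_suminf fock_coord_space[OF g] obsW_space
        obs_pairing_expansion[OF g L expansion])
  also have "\<dots> \<le> ennreal (sqrt (enn2real (fock_norm2 n Suc g)) * sqrt S)"
    by (intro suminf_ennreal_mult_le fock_norm_nonneg sum_fock_norm_coord_le[OF g u]
        sum_fock_norm_obsW_le[OF S S0 u])
  finally show ?thesis .
qed

lemma hs_norm2_hankel_diff_le:
  "hs_norm2 n Suc (\<lambda>k. k) (\<lambda>f k s idx. obsW T N C (reachR n T N \<psi> P f) k s idx
      - obsW T N C (reachR n T N \<psi> id f) k s idx)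
    \<le> ennreal (obs_gain * (gain * (\<Sum>j<n. norm (P (\<psi> j) - \<psi> j) ^ 2)))"
proof -
  let ?g = "reach_kernel (\<lambda>j. P (\<psi> j) - \<psi> j)"
  have "enn2real (fock_norm2 n Suc ?g) \<le> gain * (\<Sum>j<n. norm (P (\<psi> j) - \<psi> j) ^ 2)"
    using fock_norm2_reach_kernel_le gain_pos by (intro enn2real_leI) (auto intro!: mult_nonneg_nonneg sum_nonneg)
  then have "ennreal (obs_gain * enn2real (fock_norm2 n Suc ?g))
      \<le> ennreal (obs_gain * (gain * (\<Sum>j<n. norm (P (\<psi> j) - \<psi> j) ^ 2)))"
    using obs_gain_nonneg by (intro ennreal_leI mult_left_mono)
  with hs_norm2_obs_pairing_le[OF reach_kernel_space hankel_diff_eq] show ?thesis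
    by (rule order_trans)
qed

lemma nuclear_norm_hankel_diff_le:
  assumes "(SUP E\<in>{E. orthonormal_set E}. (\<Sum>\<^sub>\<infinity>e\<in>E. ennreal ((fock_norm n (\<lambda>k. k) (obsW T N C e))\<^sup>2))) \<le> ennreal S"
    and "0 \<le> S"
  shows "nuclear_norm n Suc (\<lambda>k. k) (\<lambda>f k s idx. obsW T N C (reachR n T N \<psi> P f) k s idx
      - obsW T N C (reachR n T N \<psi> id f) k s idx)
    \<le> ennreal (sqrt (gain * (\<Sum>j<n. norm (P (\<psi> j) - \<psi> j) ^ 2)) * sqrt S)"
proof -
  let ?g = "reach_kernel (\<lambda>j. P (\<psi> j) - \<psi> j)"
  have "enn2real (fock_norm2 n Suc ?g) \<le> gain * (\<Sum>j<n. norm (P (\<psi> j) - \<psi> j) ^ 2)"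
    using fock_norm2_reach_kernel_le gain_pos by (intro enn2real_leI) (auto intro!: mult_nonneg_nonneg sum_nonneg)
  then have "ennreal (sqrt (enn2real (fock_norm2 n Suc ?g)) * sqrt S)
      \<le> ennreal (sqrt (gain * (\<Sum>j<n. norm (P (\<psi> j) - \<psi> j) ^ 2)) * sqrt S)"
    using assms(2) by (intro ennreal_leI mult_right_mono real_sqrt_le_mono) simp_all
  with nuclear_norm_obs_pairing_le[OF reach_kernel_space hankel_diff_eq assms] show ?thesis
    by (rule order_trans)
qed

lemma nuclear_norm_hankel_diff_tendsto_0:
  assumes HS: "(SUP E\<in>{E. orthonormal_set E}. (\<Sum>\<^sub>\<infinity>e\<in>E. ennreal ((fock_norm n (\<lambda>k. k) (obsW T N C e))\<^sup>2))) < \<infinity>"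
    and P: "\<And>j. j < n \<Longrightarrow> (\<lambda>i. P i (\<psi> j)) \<longlonglongrightarrow> \<psi> j"
  shows "(\<lambda>i. nuclear_norm n Suc (\<lambda>k. k) (\<lambda>f k s idx. obsW T N C (reachR n T N \<psi> (P i) f) k s idx
      - obsW T N C (reachR n T N \<psi> id f) k s idx)) \<longlonglongrightarrow> 0"
proof -
  let ?HS = "SUP E\<in>{E. orthonormal_set E}. (\<Sum>\<^sub>\<infinity>e\<in>E. ennreal ((fock_norm n (\<lambda>k. k) (obsW T N C e))\<^sup>2))"
  have S: "?HS \<le> ennreal (enn2real ?HS)" "0 \<le> enn2real ?HS" using HS by simp_all
  have "(\<lambda>i. sqrt (gain * (\<Sum>j<n. norm (P i (\<psi> j) - \<psi> j) ^ 2)) * sqrt (enn2real ?HS))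
      \<longlonglongrightarrow> sqrt (gain * 0) * sqrt (enn2real ?HS)"
    by (intro tendsto_mult tendsto_real_sqrt tendsto_const sum_norm_diff_tendsto_0 P)
  then show ?thesis by (intro ennreal_tendsto_0_le[OF nuclear_norm_hankel_diff_le[OF S]]) simp
qed

lemma hs_norm2_hankel_diff_tendsto_0:
  assumes P: "\<And>j. j < n \<Longrightarrow> (\<lambda>i. P i (\<psi> j)) \<longlonglongrightarrow> \<psi> j"
  shows "(\<lambda>i. hs_norm2 n Suc (\<lambda>k. k) (\<lambda>f k s idx. obsW T N C (reachR n T N \<psi> (P i) f) k s idx
      - obsW T N C (reachR n T N \<psi> id f) k s idx)) \<longlonglongrightarrow> 0"
proof -
  have "(\<lambda>i. obs_gain * (gain * (\<Sum>j<n. norm (P i (\<psi> j) - \<psi> j) ^ 2))) \<longlonglongrightarrow> obs_gain * (gain * 0)"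
    by (intro tendsto_mult tendsto_const sum_norm_diff_tendsto_0 P)
  then show ?thesis by (intro ennreal_tendsto_0_le[OF hs_norm2_hankel_diff_le]) simp
qed
end

theorem proposition1p2:
  fixes T :: "real \<Rightarrow> 'x::{real_inner, banach, second_countable_topology} \<Rightarrow> 'x"
    and n :: nat
    and N :: "nat \<Rightarrow> 'x \<Rightarrow> 'x"
    and \<psi> :: "nat \<Rightarrow> 'x"
    and C :: "'x \<Rightarrow> 'h::{real_inner, banach, second_countable_topology}"
    and M \<nu> :: real
    and V :: "nat \<Rightarrow> 'x set"
  assumes T_lin: "\<forall>t\<ge>0. bounded_linear (T t)"
    and T_0: "T 0 = id"
    and T_semigroup: "\<forall>s\<ge>0. \<forall>t\<ge>0. T (s + t) = T s \<circ> T t"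
    and T_strong: "\<forall>x. ((\<lambda>t. T t x) \<longlongrightarrow> x) (at_right 0)"
    and M_ge: "M \<ge> 1" and nu_pos: "\<nu> > 0"
    and T_bound: "\<forall>t\<ge>0. onorm (T t) \<le> M * exp (- \<nu> * t)"
    and N_lin: "\<forall>i<n. bounded_linear (N i)"
    and C_lin: "bounded_linear C"
    and small: "M\<^sup>2 * (sqrt (\<Sum>i<n. onorm (N i \<circ> adj (N i))))\<^sup>2 / (2 * \<nu>) < 1"
    and V_sub: "\<forall>i. subspace (V i) \<and> closed (V i)"
    and V_mono: "\<forall>i. V i \<subseteq> V (Suc i)"
    and V_dense: "closure (\<Union>i. V i) = UNIV"
    and V_T_inv: "\<forall>i. \<forall>t\<ge>0. T t ` V i \<subseteq> V i"
    and V_N_inv: "\<forall>i. \<forall>j<n. N j ` V i \<subseteq> V i"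
  shows "((SUP E\<in>{E. orthonormal_set E}. (\<Sum>\<^sub>\<infinity>e\<in>E. ennreal ((fock_norm n (\<lambda>k. k) (obsW T N C e))\<^sup>2))) < \<infinity>
          \<longrightarrow> (\<lambda>i. nuclear_norm n Suc (\<lambda>k. k)
                 (\<lambda>f k s idx. obsW T N C (reachR n T N \<psi> (orth_proj (V i)) f) k s idx
                              - obsW T N C (reachR n T N \<psi> id f) k s idx)) \<longlonglongrightarrow> 0)
       \<and> (((\<forall>x. obsW T N C x \<in> fock_space n (\<lambda>k. k)) \<and>
           (\<exists>K. \<forall>x. fock_norm n (\<lambda>k. k) (obsW T N C x) \<le> K * norm x))
          \<longrightarrow> (\<lambda>i. hs_norm2 n Suc (\<lambda>k. k)
                 (\<lambda>f k s idx. obsW T N C (reachR n T N \<psi> (orth_proj (V i)) f) k s idx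
                              - obsW T N C (reachR n T N \<psi> id f) k s idx)) \<longlonglongrightarrow> 0)"
proof -
  have "observed_bilinear_system T N n M \<nu> C"
    unfolding observed_bilinear_system_def observed_bilinear_system_axioms_def
      stable_bilinear_system_def stable_bilinear_system_axioms_def bilinear_system_def
    using T_lin T_semigroup T_strong M_ge nu_pos T_bound N_lin small C_lin by blast
  then interpret observed_bilinear_system T N n M \<nu> C .
  have "(\<lambda>i. orth_proj (V i) (\<psi> j)) \<longlonglongrightarrow> \<psi> j" for j
    using V_sub V_mono V_dense by (intro orth_proj_tendsto incseq_SucI) auto
  then show ?thesis
    using nuclear_norm_hankel_diff_tendsto_0[where P = "\<lambda>i. orth_proj (V i)" and \<psi> = \<psi>]
      hs_norm2_hankel_diff_tendsto_0[where P = "\<lambda>i. orth_proj (V i)" and \<psi> = \<psi>] by blast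
qed

end
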